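(* Let $X$ be an FK-space containing $\phi$, and let $\overline{\phi}$ denote the closure of $\phi$ in $X$. If $Y$ is an FK-space with $\overline{\phi}\subseteq Y\subseteq X$, then $D_p^qB^+(Y)=D_p^qB^+(X)$.
   Context: An FK-space is a vector subspace of the space $w$ of all complex sequences with a complete metrizable locally convex topology in which coordinate functionals are continuous; $X'$ is its continuous dual. $\delta^j$ has $1$ in position $j$, $0$ elsewhere; $\phi=\operatorname{span}\{\delta^j\}$. $p(n)<q(n)$ are nonnegative integer sequences with $q(n)\to\infty$. For an FK-space $X\supseteq\phi$, $D_p^qB^+(X)=\{x\in w:\sup_n|\frac{1}{q(n)-p(n)}\sum_{k=p(n)+1}^{q(n)}\sum_{j=1}^kx_jf(\delta^j)|<\infty\ \forall f\in X'\}$. *)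

theory Defs
  imports "HOL-Analysis.Analysis"
begin

text \<open>Complex sequences are modelled as functions nat => complex; position j (0-based)
  corresponds to the paper's position j+1.\<close>

type_synonym seq = "nat \<Rightarrow> complex"

definition delta :: "nat \<Rightarrow> seq" where
  "delta j = (\<lambda>i. if i = j then 1 else 0)"

definition phi :: "seq set" where
  "phi = {(\<lambda>i. \<Sum>j\<in>F. c j * delta j i) | F c. finite F}"

definition linear_subspace :: "seq set \<Rightarrow> bool" where
  "linear_subspace X \<longleftrightarrow> (\<lambda>i. 0) \<in> X \<and>
     (\<forall>x\<in>X. \<forall>y\<in>X. (\<lambda>i. x i + y i) \<in> X) \<and>
     (\<forall>c::complex. \<forall>x\<in>X. (\<lambda>i. c * x i) \<in> X)"

definition vector_topology :: "seq set \<Rightarrow> seq topology \<Rightarrow> bool" where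
  "vector_topology X T \<longleftrightarrow> topspace T = X \<and>
     continuous_map (prod_topology T T) T (\<lambda>(x, y). (\<lambda>i. x i + y i)) \<and>
     continuous_map (prod_topology (euclidean :: complex topology) T) T
        (\<lambda>(c, x). (\<lambda>i. c * x i))"

definition convex_seqset :: "seq set \<Rightarrow> bool" where
  "convex_seqset V \<longleftrightarrow> (\<forall>x\<in>V. \<forall>y\<in>V. \<forall>u::real. 0 \<le> u \<and> u \<le> 1 \<longrightarrow>
      (\<lambda>i. complex_of_real u * x i + complex_of_real (1 - u) * y i) \<in> V)"

definition locally_convex :: "seq topology \<Rightarrow> bool" where
  "locally_convex T \<longleftrightarrow> (\<forall>U. openin T U \<and> (\<lambda>i. 0) \<in> U \<longrightarrow>
      (\<exists>V. openin T V \<and> (\<lambda>i. 0) \<in> V \<and> V \<subseteq> U \<and> convex_seqset V))"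

definition complete_metrizable :: "seq set \<Rightarrow> seq topology \<Rightarrow> bool" where
  "complete_metrizable X T \<longleftrightarrow> (\<exists>d. Metric_space X d \<and> Metric_space.mcomplete X d \<and>
      Metric_space.mtopology X d = T)"

definition FK_space :: "seq set \<Rightarrow> seq topology \<Rightarrow> bool" where
  "FK_space X T \<longleftrightarrow> linear_subspace X \<and> vector_topology X T \<and> locally_convex T \<and>
     complete_metrizable X T \<and>
     (\<forall>j. continuous_map T (euclidean :: complex topology) (\<lambda>x. x j))"

definition dual :: "seq set \<Rightarrow> seq topology \<Rightarrow> (seq \<Rightarrow> complex) set" where
  "dual X T = {f. continuous_map T (euclidean :: complex topology) f \<and>
     (\<forall>x\<in>X. \<forall>y\<in>X. f (\<lambda>i. x i + y i) = f x + f y) \<and>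
     (\<forall>c. \<forall>x\<in>X. f (\<lambda>i. c * x i) = c * f x)}"

text \<open>D_p^q B^+(X), reindexed 0-based: paper's k in {p(n)+1..q(n)} becomes {p(n)..<q(n)},
  paper's j in {1..k} becomes {0..k}.\<close>
definition DqpBplus :: "(nat \<Rightarrow> nat) \<Rightarrow> (nat \<Rightarrow> nat) \<Rightarrow> seq set \<Rightarrow> seq topology \<Rightarrow> seq set" where
  "DqpBplus p q X T = {x. \<forall>f\<in>dual X T. bounded (range (\<lambda>n.
      (1 / of_nat (q n - p n)) * (\<Sum>k\<in>{p n..<q n}. \<Sum>j\<in>{0..k}. x j * f (delta j))))}"

end

theory Submission
  imports Defs "HOL-Library.Function_Algebras"
begin

text \<open>The set D_p^q B^+ depends on the dual only through the values f (delta j).  Every continuous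
  functional on X restricts to one on Y, and every continuous functional on Y restricts to the
  closure P of phi and then extends to X; neither step changes the values on the unit vectors.
  The restrictions are continuous because an inclusion between F-spaces with continuous
  coordinates is continuous: Baire's theorem makes it almost continuous, and a closed graph
  argument, with Klee's lemma replacing the missing translation invariance of the metrics,
  upgrades this to continuity.  The extension is the Hahn-Banach theorem in the locally convex
  space X, dominated by the Minkowski functional of a convex neighbourhood of 0 on which the given
  functional is bounded.\<close>

definition scale_seq :: "complex \<Rightarrow> seq \<Rightarrow> seq" (infixr "*\<^sub>s" 75) where
  "c *\<^sub>s x = (\<lambda>i. c * x i)"

lemma scale_seq_apply [simp]: "(c *\<^sub>s x) i = c * x i"
  by (simp add: scale_seq_def)

lemma scale_seq_scale_seq [simp]: "a *\<^sub>s b *\<^sub>s x = (a * b) *\<^sub>s x"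
  and scale_seq_one [simp]: "1 *\<^sub>s x = x"
  and scale_seq_zero_left [simp]: "0 *\<^sub>s x = 0"
  and scale_seq_zero_right [simp]: "c *\<^sub>s 0 = 0"
  and scale_seq_minus_one [simp]: "(-1) *\<^sub>s x = - x"
  and scale_seq_uminus_right [simp]: "c *\<^sub>s (- x) = - (c *\<^sub>s x)"
  and scale_seq_add_right: "c *\<^sub>s (x + y) = c *\<^sub>s x + c *\<^sub>s y"
  and scale_seq_diff_right: "c *\<^sub>s (x - y) = c *\<^sub>s x - c *\<^sub>s y"
  and scale_seq_add_left: "(a + b) *\<^sub>s x = a *\<^sub>s x + b *\<^sub>s x"
  by (simp_all add: fun_eq_iff algebra_simps)

lemma linear_subspace_iff:
  "linear_subspace X \<longleftrightarrow> 0 \<in> X \<and> (\<forall>x\<in>X. \<forall>y\<in>X. x + y \<in> X) \<and> (\<forall>c. \<forall>x\<in>X. c *\<^sub>s x \<in> X)"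
  by (simp add: linear_subspace_def plus_fun_def zero_fun_def scale_seq_def)

lemma vector_topology_iff:
  "vector_topology X T \<longleftrightarrow> topspace T = X \<and>
     continuous_map (prod_topology T T) T (\<lambda>(x, y). x + y) \<and>
     continuous_map (prod_topology euclidean T) T (\<lambda>(c, x). c *\<^sub>s x)"
  by (simp add: vector_topology_def plus_fun_def scale_seq_def)

lemma convex_seqset_iff:
  "convex_seqset V \<longleftrightarrow> (\<forall>x\<in>V. \<forall>y\<in>V. \<forall>u::real. 0 \<le> u \<and> u \<le> 1 \<longrightarrow>
     of_real u *\<^sub>s x + of_real (1 - u) *\<^sub>s y \<in> V)"
  by (simp add: convex_seqset_def plus_fun_def scale_seq_def)

definition linear_on :: "seq set \<Rightarrow> (seq \<Rightarrow> complex) \<Rightarrow> bool" where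
  "linear_on X f \<longleftrightarrow> (\<forall>x\<in>X. \<forall>y\<in>X. f (x + y) = f x + f y) \<and> (\<forall>c. \<forall>x\<in>X. f (c *\<^sub>s x) = c * f x)"

lemma mem_dual_iff: "f \<in> dual X T \<longleftrightarrow> continuous_map T euclidean f \<and> linear_on X f"
  by (simp add: dual_def linear_on_def plus_fun_def scale_seq_def)

lemma phi_eq_finite_support: "phi = {x. finite {j. x j \<noteq> 0}}"
proof (intro set_eqI iffI)
  fix x :: seq assume "x \<in> phi"
  then obtain F c where F: "finite F" "x = (\<lambda>i. \<Sum>j\<in>F. c j * delta j i)"
    unfolding phi_def by blast
  have "{j. x j \<noteq> 0} \<subseteq> F"
  proof
    fix i assume "i \<in> {j. x j \<noteq> 0}"
    then obtain j where "j \<in> F" "c j * delta j i \<noteq> 0"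
      using F(2) by (metis (mono_tags, lifting) mem_Collect_eq sum.neutral)
    then show "i \<in> F" by (auto simp: delta_def split: if_splits)
  qed
  then show "x \<in> {x. finite {j. x j \<noteq> 0}}" using F(1) finite_subset by auto
next
  fix x :: seq assume "x \<in> {x. finite {j. x j \<noteq> 0}}"
  then have fin: "finite {j. x j \<noteq> 0}" by simp
  have "x i = (\<Sum>j\<in>{j. x j \<noteq> 0}. x j * delta j i)" for i
    using fin by (simp add: delta_def if_distrib sum.delta' cong: if_cong)
  then show "x \<in> phi" unfolding phi_def using fin by blast
qed

lemma delta_in_phi: "delta j \<in> phi"
  unfolding phi_eq_finite_support by (simp add: delta_def)

lemma linear_subspace_phi: "linear_subspace phi"
proof -
  have "finite {j. x j + y j \<noteq> 0}" if "finite {j. x j \<noteq> 0}" "finite {j. y j \<noteq> 0}" for x y :: seq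
    by (rule finite_subset[of _ "{j. x j \<noteq> 0} \<union> {j. y j \<noteq> 0}"]) (use that in auto)
  moreover have "finite {j. c * x j \<noteq> 0}" if "finite {j. x j \<noteq> 0}" for c and x :: seq
    by (rule finite_subset[of _ "{j. x j \<noteq> 0}"]) (use that in auto)
  ultimately show ?thesis
    unfolding linear_subspace_iff phi_eq_finite_support by auto
qed

lemma linear_subspace_closed:
  assumes "linear_subspace X"
  shows "0 \<in> X" "x \<in> X \<Longrightarrow> y \<in> X \<Longrightarrow> x + y \<in> X" "x \<in> X \<Longrightarrow> c *\<^sub>s x \<in> X"
    "x \<in> X \<Longrightarrow> - x \<in> X" "x \<in> X \<Longrightarrow> y \<in> X \<Longrightarrow> x - y \<in> X"
proof -
  show 0: "0 \<in> X" and add: "x \<in> X \<Longrightarrow> y \<in> X \<Longrightarrow> x + y \<in> X"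
    and scale: "x \<in> X \<Longrightarrow> c *\<^sub>s x \<in> X" for x y c
    using assms by (simp_all add: linear_subspace_iff)
  show uminus: "- x \<in> X" if "x \<in> X" for x using scale[OF that, of "-1"] by simp
  show "x \<in> X \<Longrightarrow> y \<in> X \<Longrightarrow> x - y \<in> X"
    by (simp only: diff_conv_add_uminus add uminus)
qed

lemma continuous_map_pair_neighbourhoods:
  assumes h: "continuous_map (prod_topology T T) T h" and U: "openin T U"
    and ab: "a \<in> topspace T" "b \<in> topspace T" "h (a, b) \<in> U"
  shows "\<exists>A B. openin T A \<and> openin T B \<and> a \<in> A \<and> b \<in> B \<and> (\<forall>x\<in>A. \<forall>y\<in>B. h (x, y) \<in> U)"
proof -
  define P where "P = {z \<in> topspace (prod_topology T T). h z \<in> U}"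
  have "openin (prod_topology T T) P" "(a, b) \<in> P"
    using openin_continuous_map_preimage[OF h U] ab by (simp_all add: P_def)
  then obtain A B where "openin T A" "openin T B" "a \<in> A" "b \<in> B" "A \<times> B \<subseteq> P"
    by (metis openin_prod_topology_alt)
  then show ?thesis unfolding P_def by blast
qed

locale seq_tvs =
  fixes X :: "seq set" and T :: "seq topology"
  assumes linear_subspace: "linear_subspace X" and vector_topology: "vector_topology X T"
begin

lemma topspace_eq [simp]: "topspace T = X"
  using vector_topology by (simp add: vector_topology_iff)

lemma zero_mem [simp]: "0 \<in> X"
  and add_mem [simp]: "x \<in> X \<Longrightarrow> y \<in> X \<Longrightarrow> x + y \<in> X"
  and scale_mem [simp]: "x \<in> X \<Longrightarrow> c *\<^sub>s x \<in> X"
  and uminus_mem [simp]: "x \<in> X \<Longrightarrow> - x \<in> X"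
  and diff_mem [simp]: "x \<in> X \<Longrightarrow> y \<in> X \<Longrightarrow> x - y \<in> X"
  using linear_subspace by (simp_all add: linear_subspace_closed)

lemma openin_subset_carrier: "openin T U \<Longrightarrow> U \<subseteq> X"
  using openin_subset by fastforce

lemma continuous_map_add_pair: "continuous_map (prod_topology T T) T (\<lambda>(x, y). x + y)"
  and continuous_map_scale_pair: "continuous_map (prod_topology euclidean T) T (\<lambda>(c, x). c *\<^sub>s x)"
  using vector_topology by (simp_all add: vector_topology_iff)

lemma continuous_map_add:
  assumes "continuous_map Z T f" "continuous_map Z T g"
  shows "continuous_map Z T (\<lambda>z. f z + g z)"
  using continuous_map_compose[OF continuous_map_pairedI[OF assms] continuous_map_add_pair]
  by (simp add: o_def)

lemma continuous_map_scale:
  assumes "continuous_map Z euclidean c" "continuous_map Z T f"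
  shows "continuous_map Z T (\<lambda>z. c z *\<^sub>s f z)"
  using continuous_map_compose[OF continuous_map_pairedI[OF assms] continuous_map_scale_pair]
  by (simp add: o_def)

lemma continuous_map_diff:
  assumes "continuous_map Z T f" "continuous_map Z T g"
  shows "continuous_map Z T (\<lambda>z. f z - g z)"
proof -
  have "continuous_map Z T (\<lambda>z. f z + (-1) *\<^sub>s g z)"
    by (intro continuous_map_add continuous_map_scale assms) simp
  then show ?thesis by simp
qed

lemma continuous_map_diff_pair: "continuous_map (prod_topology T T) T (\<lambda>(x, y). x - y)"
  using continuous_map_diff[OF continuous_map_fst continuous_map_snd] by (simp add: case_prod_unfold)

lemma continuous_map_scale_const: "continuous_map T T (\<lambda>x. c *\<^sub>s x)"
  by (intro continuous_map_scale continuous_map_id[unfolded id_def]) simp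

lemma openin_preimage:
  "continuous_map T T h \<Longrightarrow> openin T U \<Longrightarrow> openin T {x \<in> X. h x \<in> U}"
  using openin_continuous_map_preimage by fastforce

lemma continuous_map_translations:
  "a \<in> X \<Longrightarrow> continuous_map T T (\<lambda>x. a + x)"
  "a \<in> X \<Longrightarrow> continuous_map T T (\<lambda>x. x - a)"
  "a \<in> X \<Longrightarrow> continuous_map T T (\<lambda>x. a - x)"
  by (intro continuous_map_add continuous_map_diff continuous_map_id[unfolded id_def]; simp)+

lemma openin_translate_preimage:
  "a \<in> X \<Longrightarrow> openin T U \<Longrightarrow> openin T {x \<in> X. a + x \<in> U}"
  "a \<in> X \<Longrightarrow> openin T U \<Longrightarrow> openin T {x \<in> X. x - a \<in> U}"
  "a \<in> X \<Longrightarrow> openin T U \<Longrightarrow> openin T {x \<in> X. a - x \<in> U}"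
  by (simp_all add: openin_preimage continuous_map_translations)

lemma zero_neighbourhood_add:
  assumes "openin T U" "0 \<in> U"
  shows "\<exists>W. openin T W \<and> 0 \<in> W \<and> (\<forall>a\<in>W. \<forall>b\<in>W. a + b \<in> U)"
proof -
  obtain A B where "openin T A" "openin T B" "0 \<in> A" "0 \<in> B" "\<forall>x\<in>A. \<forall>y\<in>B. x + y \<in> U"
    using continuous_map_pair_neighbourhoods[OF continuous_map_add_pair assms(1), of 0 0] assms
    by auto
  then show ?thesis by (intro exI[of _ "A \<inter> B"]) auto
qed

lemma zero_neighbourhood_diff:
  assumes "openin T U" "0 \<in> U"
  shows "\<exists>W. openin T W \<and> 0 \<in> W \<and> (\<forall>a\<in>W. \<forall>b\<in>W. a - b \<in> U)"
proof -
  obtain A B where "openin T A" "openin T B" "0 \<in> A" "0 \<in> B" "\<forall>x\<in>A. \<forall>y\<in>B. x - y \<in> U"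
    using continuous_map_pair_neighbourhoods[OF continuous_map_diff_pair assms(1), of 0 0] assms
    by auto
  then show ?thesis by (intro exI[of _ "A \<inter> B"]) auto
qed

lemma zero_neighbourhood_base:
  assumes "metrizable_space T"
  obtains B :: "nat \<Rightarrow> seq set" where "\<And>n. openin T (B n)" "\<And>n. 0 \<in> B n"
    "\<And>U. openin T U \<Longrightarrow> 0 \<in> U \<Longrightarrow> \<exists>n. \<forall>m\<ge>n. B m \<subseteq> U"
proof -
  obtain M d where "Metric_space M d" and Td: "T = Metric_space.mtopology M d"
    using assms unfolding metrizable_space_def by blast
  interpret Metric_space M d by fact
  have "M = X" using Td topspace_eq topspace_mtopology by blast
  define B where "B n = mball 0 (1 / real (Suc n))" for n
  have "\<exists>n. \<forall>m\<ge>n. B m \<subseteq> U" if U: "openin T U" "0 \<in> U" for U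
  proof -
    obtain r where r: "r > 0" "mball 0 r \<subseteq> U"
      using U unfolding Td openin_mtopology by blast
    obtain n where n: "1 / real (Suc n) < r" using r(1) nat_approx_posE by blast
    have "B m \<subseteq> U" if "m \<ge> n" for m
    proof -
      have "1 / real (Suc m) \<le> 1 / real (Suc n)" using that by (simp add: frac_le)
      then have "B m \<subseteq> mball 0 r" unfolding B_def using n by (intro mball_subset_concentric) simp
      then show ?thesis using r(2) by blast
    qed
    then show ?thesis by blast
  qed
  moreover have "openin T (B n)" "0 \<in> B n" for n
    using zero_mem unfolding B_def Td \<open>M = X\<close>[symmetric] by simp_all
  ultimately show thesis using that by blast
qed

lemma small_scalars:
  assumes "openin T U" "0 \<in> U" "y \<in> X"
  shows "\<exists>e>0. \<forall>c. cmod c < e \<longrightarrow> c *\<^sub>s y \<in> U"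
proof -
  have "continuous_map euclidean T (\<lambda>c. c *\<^sub>s y)"
    by (intro continuous_map_scale continuous_map_id[unfolded id_def]) (simp add: assms)
  then have "open {c. c *\<^sub>s y \<in> U}"
    using openin_continuous_map_preimage[OF _ assms(1)] by fastforce
  moreover have "0 \<in> {c. c *\<^sub>s y \<in> U}" using assms by simp
  ultimately obtain e where "e > 0" "ball 0 e \<subseteq> {c. c *\<^sub>s y \<in> U}"
    by (meson open_contains_ball)
  then show ?thesis by (intro exI[of _ e]) (auto simp: dist_norm)
qed

lemma absorbing:
  assumes "openin T U" "0 \<in> U" "y \<in> X"
  shows "\<exists>n. (1 / of_nat (Suc n)) *\<^sub>s y \<in> U"
proof -
  obtain e where e: "e > 0" "\<And>c. cmod c < e \<Longrightarrow> c *\<^sub>s y \<in> U"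
    using small_scalars[OF assms] by blast
  obtain n :: nat where "1 / real (Suc n) < e"
    using e(1) by (metis nat_approx_posE)
  then have "cmod (1 / of_nat (Suc n)) < e"
    by (simp only: norm_divide norm_one norm_of_nat)
  then show ?thesis using e by blast
qed

end

section \<open>Klee's lemma\<close>

definition tvs_Cauchy :: "seq topology \<Rightarrow> (nat \<Rightarrow> seq) \<Rightarrow> bool" where
  "tvs_Cauchy T s \<longleftrightarrow> (\<forall>U. openin T U \<longrightarrow> 0 \<in> U \<longrightarrow> (\<exists>M. \<forall>m\<ge>M. \<forall>n\<ge>m. s n - s m \<in> U))"

context seq_tvs
begin

text \<open>A complete metric d inducing T need not be translation invariant, so a tvs-Cauchy sequence s
  need not be d-Cauchy.  Following Klee, Baire's theorem applied to the dense open sets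
  klee_set d s (1 / Suc k) yields a point x for which the translate x + s is d-Cauchy.\<close>

definition klee_set :: "(seq \<Rightarrow> seq \<Rightarrow> real) \<Rightarrow> (nat \<Rightarrow> seq) \<Rightarrow> real \<Rightarrow> seq set" where
  "klee_set d s r = {x \<in> X. \<exists>Q V N. openin T Q \<and> (\<forall>a\<in>Q. \<forall>b\<in>Q. d a b \<le> r) \<and>
      openin T V \<and> 0 \<in> V \<and> (\<forall>n\<ge>N. \<forall>v\<in>V. x + s n + v \<in> Q)}"

lemma openin_klee_set: "openin T (klee_set d s r)"
proof (subst openin_subopen, intro ballI)
  fix x assume "x \<in> klee_set d s r"
  then obtain Q V N where x: "x \<in> X" "openin T Q" "\<forall>a\<in>Q. \<forall>b\<in>Q. d a b \<le> r"
    "openin T V" "0 \<in> V" "\<forall>n\<ge>N. \<forall>v\<in>V. x + s n + v \<in> Q"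
    unfolding klee_set_def by blast
  obtain V' where V': "openin T V'" "0 \<in> V'" "\<forall>a\<in>V'. \<forall>b\<in>V'. a + b \<in> V"
    using zero_neighbourhood_add[OF x(4,5)] by blast
  define O' where "O' = {x' \<in> X. x' - x \<in> V'}"
  have "x' \<in> klee_set d s r" if x': "x' \<in> O'" for x'
  proof -
    have "x' + s n + v \<in> Q" if "N \<le> n" "v \<in> V'" for n v
    proof -
      have "(x' - x) + v \<in> V" using V'(3) x' that by (simp add: O'_def)
      then have "x + s n + ((x' - x) + v) \<in> Q" using x(6) that by blast
      moreover have "x + s n + ((x' - x) + v) = x' + s n + v" by (simp add: algebra_simps)
      ultimately show ?thesis by simp
    qed
    then show ?thesis using x' x V' unfolding klee_set_def O'_def by blast
  qed
  moreover have "openin T O'" "x \<in> O'"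
    using openin_translate_preimage(2)[OF x(1) V'(1)] x(1) V'(2) by (simp_all add: O'_def)
  ultimately show "\<exists>O'. openin T O' \<and> x \<in> O' \<and> O' \<subseteq> klee_set d s r" by blast
qed

lemma klee_set_meets_open:
  assumes d: "Metric_space X d" "Metric_space.mtopology X d = T"
    and s: "range s \<subseteq> X" "tvs_Cauchy T s" and "r > 0"
    and G: "openin T G" "x0 \<in> G"
  shows "klee_set d s r \<inter> G \<noteq> {}"
proof -
  interpret Metric_space X d by (fact d)
  have x0: "x0 \<in> X" using G openin_subset_carrier by blast
  have sX: "s n \<in> X" for n using s(1) by blast
  obtain N1 where N1: "\<forall>m\<ge>N1. \<forall>n\<ge>m. x0 - (s n - s m) \<in> G"
    using s(2) openin_translate_preimage(3)[OF x0 G(1)] G(2) unfolding tvs_Cauchy_def by fastforce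
  define p where "p = x0 + s N1"
  define Q where "Q = mball p (r / 2)"
  have p: "p \<in> X" using x0 sX by (simp add: p_def)
  have diam: "\<forall>a\<in>Q. \<forall>b\<in>Q. d a b \<le> r"
  proof (intro ballI)
    fix a b assume "a \<in> Q" "b \<in> Q"
    then have "d a p < r / 2" "d p b < r / 2" "a \<in> X" "b \<in> X" "p \<in> X"
      by (auto simp: Q_def commute)
    then show "d a b \<le> r" using triangle[of a p b] by linarith
  qed
  have Q: "openin T Q" "0 \<in> {y \<in> X. p + y \<in> Q}"
    using d(2) p \<open>r > 0\<close> by (auto simp: Q_def)
  obtain V where V: "openin T V" "0 \<in> V" "\<forall>a\<in>V. \<forall>b\<in>V. a + b \<in> {y \<in> X. p + y \<in> Q}"
    using zero_neighbourhood_add[OF openin_translate_preimage(1)[OF p Q(1)] Q(2)] by blast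
  obtain M0 where M0: "\<forall>m\<ge>M0. \<forall>n\<ge>m. s n - s m \<in> V" using s(2) V unfolding tvs_Cauchy_def by blast
  define M where "M = max M0 N1"
  define x where "x = x0 - (s M - s N1)"
  have tail: "\<forall>n\<ge>M. \<forall>v\<in>V. x + s n + v \<in> Q"
  proof (intro allI impI ballI)
    fix n v assume "M \<le> n" "v \<in> V"
    have "p + ((s n - s M) + v) \<in> Q" using V(3) M0 \<open>M \<le> n\<close> \<open>v \<in> V\<close> by (simp add: M_def)
    moreover have "p + ((s n - s M) + v) = x + s n + v" by (simp add: p_def x_def algebra_simps)
    ultimately show "x + s n + v \<in> Q" by simp
  qed
  have "x \<in> X" using x0 sX by (simp add: x_def)
  then have "x \<in> klee_set d s r"
    unfolding klee_set_def using Q(1) diam V(1,2) tail by blast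
  moreover have "x \<in> G" using N1 by (simp add: x_def M_def)
  ultimately show ?thesis by blast
qed

lemma klee_set_MCauchy:
  assumes "Metric_space X d" "range s \<subseteq> X" and x: "\<And>k. x \<in> klee_set d s (1 / real (Suc k))"
  shows "Metric_space.MCauchy X d (\<lambda>n. x + s n)"
proof -
  interpret Metric_space X d by fact
  show ?thesis
    unfolding MCauchy_def
  proof (intro conjI allI impI)
    show "range (\<lambda>n. x + s n) \<subseteq> X" using x[of 0] assms(2) by (auto simp: klee_set_def)
    fix e :: real assume "e > 0"
    then obtain k where k: "1 / real (Suc k) < e" by (metis nat_approx_posE)
    obtain Q V N where Q: "\<forall>a\<in>Q. \<forall>b\<in>Q. d a b \<le> 1 / real (Suc k)" "0 \<in> V"
      "\<forall>n\<ge>N. \<forall>v\<in>V. x + s n + v \<in> Q"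
      using x[of k] unfolding klee_set_def by blast
    have "x + s n \<in> Q" if "n \<ge> N" for n
      using Q(2,3) that by fastforce
    then have "\<forall>n n'. N \<le> n \<longrightarrow> N \<le> n' \<longrightarrow> d (x + s n) (x + s n') < e"
      using Q(1) k by (meson order_le_less_trans)
    then show "\<exists>N. \<forall>n n'. N \<le> n \<longrightarrow> N \<le> n' \<longrightarrow> d (x + s n) (x + s n') < e" by blast
  qed
qed

lemma tvs_Cauchy_convergent:
  assumes cm: "completely_metrizable_space T" and s: "range s \<subseteq> X" "tvs_Cauchy T s"
  shows "\<exists>z\<in>X. limitin T s z sequentially"
proof -
  obtain M d where Md: "Metric_space M d" "Metric_space.mcomplete M d" "Metric_space.mtopology M d = T"
    using cm unfolding completely_metrizable_space_def by blast
  moreover have "M = X" using Md(3) topspace_eq Metric_space.topspace_mtopology[OF Md(1)] by simp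
  ultimately have d: "Metric_space X d" "Metric_space.mcomplete X d" "Metric_space.mtopology X d = T"
    by auto
  interpret Metric_space X d by (fact d(1))
  define D where "D k = klee_set d s (1 / real (Suc k))" for k
  have "T closure_of (D k) = X" for k
    using dense_intersects_open[of T "D k"] klee_set_meets_open[OF d(1,3) s, of "1 / real (Suc k)"]
    unfolding D_def by auto
  then have "T closure_of \<Inter>(range D) = topspace T"
    by (intro Baire_category) (auto simp: cm D_def openin_klee_set)
  then have "\<Inter>(range D) \<noteq> {}" using zero_mem by fastforce
  then obtain x where x: "\<And>k. x \<in> D k" by blast
  have "x \<in> klee_set d s (1 / real (Suc k))" for k using x[of k] by (simp add: D_def)
  then have "MCauchy (\<lambda>n. x + s n)" by (rule klee_set_MCauchy[OF d(1) s(1)])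
  then obtain y where y: "limitin T (\<lambda>n. x + s n) y sequentially"
    using d(2,3) unfolding mcomplete_def by blast
  have "x \<in> X" using x[of 0] by (simp add: D_def klee_set_def)
  have "limitin T ((\<lambda>w. w - x) \<circ> (\<lambda>n. x + s n)) (y - x) sequentially"
    by (rule continuous_map_limit[OF _ y])
      (intro continuous_map_diff continuous_map_id[unfolded id_def]; simp add: \<open>x \<in> X\<close>)
  moreover have "y \<in> X" using y limitin_topspace by fastforce
  ultimately show ?thesis using \<open>x \<in> X\<close> by (intro bexI[of _ "y - x"]) (simp_all add: o_def)
qed

end

section \<open>Continuity of inclusions between F-spaces\<close>

text \<open>An FK-space without the local convexity requirement, which the closed graph argument does
  not use.\<close>

locale seq_F_space = seq_tvs +
  assumes completely_metrizable: "completely_metrizable_space T"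
    and continuous_coordinate: "\<And>j. continuous_map T euclidean (\<lambda>x. x j)"

lemma (in seq_F_space) metrizable: "metrizable_space T"
  by (rule completely_metrizable_imp_metrizable_space[OF completely_metrizable])

lemma Baire_nonempty_interior:
  fixes A :: "nat \<Rightarrow> 'a set"
  assumes "completely_metrizable_space T" "topspace T \<noteq> {}"
    and "\<And>n. closedin T (A n)" "topspace T \<subseteq> (\<Union>n. A n)"
  shows "\<exists>n. T interior_of A n \<noteq> {}"
proof (rule ccontr)
  assume "\<not> ?thesis"
  moreover have "countable (range A)" by simp
  ultimately have "T interior_of (\<Union>n. A n) = {}"
    by (intro Baire_category_alt) (auto simp: assms)
  moreover have "(\<Union>n. A n) = topspace T"
    using assms(3,4) closedin_subset by blast
  ultimately show False using assms(2) by simp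
qed

lemma telescoping_mem:
  fixes s :: "nat \<Rightarrow> 'a::ab_group_add"
  assumes "\<And>m. 0 \<in> W m" "\<And>m a b. a \<in> W (Suc m) \<Longrightarrow> b \<in> W (Suc m) \<Longrightarrow> a + b \<in> W m"
    and "\<And>m. s (Suc m) - s m \<in> W (Suc m)"
  shows "s (m + k) - s m \<in> W m"
proof (induction k arbitrary: m)
  case 0
  then show ?case using assms(1) by simp
next
  case (Suc k)
  have "(s (Suc m) - s m) + (s (Suc m + k) - s (Suc m)) \<in> W m"
    using assms(2,3) Suc.IH by blast
  then show ?case by (simp add: algebra_simps)
qed

lemma tvs_Cauchy_if_telescoping:
  assumes "\<And>U. openin T U \<Longrightarrow> 0 \<in> U \<Longrightarrow> \<exists>N. \<forall>m\<ge>N. W m \<subseteq> U"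
    and "\<And>m k. s (m + k) - s m \<in> W m"
  shows "tvs_Cauchy T s"
  unfolding tvs_Cauchy_def
proof (intro allI impI)
  fix U assume "openin T U" "0 \<in> U"
  then obtain N where N: "\<forall>m\<ge>N. W m \<subseteq> U" using assms(1) by blast
  have "s n - s m \<in> U" if "m \<ge> N" "n \<ge> m" for m n
    using assms(2)[of m "n - m"] N that by auto
  then show "\<exists>M. \<forall>m\<ge>M. \<forall>n\<ge>m. s n - s m \<in> U" by blast
qed

lemma limit_unique_by_coordinates:
  fixes s :: "nat \<Rightarrow> seq"
  assumes "\<And>j. continuous_map S euclidean (\<lambda>x. x j)" "\<And>j. continuous_map T euclidean (\<lambda>x. x j)"
    and "limitin S s x sequentially" "limitin T s z sequentially"
  shows "x = z"
proof
  fix j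
  have "limitin euclidean ((\<lambda>x. x j) \<circ> s) (x j) sequentially"
    "limitin euclidean ((\<lambda>x. x j) \<circ> s) (z j) sequentially"
    by (rule continuous_map_limit[OF assms(1) assms(3)], rule continuous_map_limit[OF assms(2) assms(4)])
  then have "((\<lambda>x. x j) \<circ> s) \<longlonglongrightarrow> x j" "((\<lambda>x. x j) \<circ> s) \<longlonglongrightarrow> z j"
    by (simp_all only: limitin_canonical_iff)
  then show "x j = z j" by (rule LIMSEQ_unique)
qed

context seq_tvs
begin

lemma closure_of_differences_zero_neighbourhood:
  assumes "openin T G" "y \<in> G" "G \<subseteq> T closure_of A"
  shows "\<exists>V. openin T V \<and> 0 \<in> V \<and> V \<subseteq> T closure_of ((\<lambda>(a, b). a - b) ` (A \<times> A))"
proof -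
  have y: "y \<in> X" using assms(1,2) openin_subset_carrier by blast
  define V where "V = {v \<in> X. y + v \<in> G}"
  have "v \<in> T closure_of ((\<lambda>(a, b). a - b) ` (A \<times> A))" if "v \<in> V" for v
  proof -
    have "(y + v, y) \<in> prod_topology T T closure_of (A \<times> A)"
      using that assms(2,3) by (auto simp: V_def closure_of_Times)
    then have "(\<lambda>(a, b). a - b) (y + v, y) \<in> T closure_of ((\<lambda>(a, b). a - b) ` (A \<times> A))"
      using continuous_map_image_closure_subset[OF continuous_map_diff_pair] by blast
    then show ?thesis by simp
  qed
  moreover have "openin T V" "0 \<in> V"
    using openin_translate_preimage(1)[OF y assms(1)] assms(2) y by (simp_all add: V_def)
  ultimately show ?thesis by blast
qed

lemma halving_zero_neighbourhood_base:
  assumes "metrizable_space T" "openin T U" "0 \<in> U"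
  obtains W :: "nat \<Rightarrow> seq set" where "\<And>m. openin T (W m)" "\<And>m. 0 \<in> W m"
    "\<And>a b. a \<in> W 0 \<Longrightarrow> b \<in> W 0 \<Longrightarrow> a + b \<in> U"
    "\<And>m a b. a \<in> W (Suc m) \<Longrightarrow> b \<in> W (Suc m) \<Longrightarrow> a + b \<in> W m"
    "\<And>U'. openin T U' \<Longrightarrow> 0 \<in> U' \<Longrightarrow> \<exists>N. \<forall>m\<ge>N. W m \<subseteq> U'"
proof -
  obtain B :: "nat \<Rightarrow> seq set" where B: "\<And>n. openin T (B n)" "\<And>n. 0 \<in> B n"
    "\<And>U. openin T U \<Longrightarrow> 0 \<in> U \<Longrightarrow> \<exists>n. \<forall>m\<ge>n. B m \<subseteq> U"
    using zero_neighbourhood_base[OF assms(1)] by metis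
  define P where "P (m::nat) W' \<longleftrightarrow> openin T W' \<and> 0 \<in> W' \<and> (m = 0 \<longrightarrow> (\<forall>a\<in>W'. \<forall>b\<in>W'. a + b \<in> U))"
    for m W'
  define Q where "Q m W' W'' \<longleftrightarrow> (\<forall>a\<in>W''. \<forall>b\<in>W''. a + b \<in> W') \<and> W'' \<subseteq> B m" for m W' W''
  have start: "\<exists>W'. P 0 W'" using zero_neighbourhood_add[OF assms(2,3)] by (auto simp: P_def)
  have step: "\<exists>W''. P (Suc m) W'' \<and> Q m W' W''" if "P m W'" for m W'
  proof -
    have "openin T W'" "0 \<in> W'" using that by (simp_all add: P_def)
    then obtain W'' where "openin T W''" "0 \<in> W''" "\<forall>a\<in>W''. \<forall>b\<in>W''. a + b \<in> W'"
      using zero_neighbourhood_add by blast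
    then show ?thesis using B(1,2)[of m] by (intro exI[of _ "W'' \<inter> B m"]) (auto simp: P_def Q_def)
  qed
  obtain W where W: "\<And>m. P m (W m)" "\<And>m. Q m (W m) (W (Suc m))"
    using dependent_nat_choice[of P Q, OF start step] by auto
  show thesis
  proof (rule that)
    show "openin T (W m)" "0 \<in> W m" for m using W(1)[of m] by (simp_all add: P_def)
    show "a + b \<in> U" if "a \<in> W 0" "b \<in> W 0" for a b using W(1)[of 0] that by (simp add: P_def)
    show "a + b \<in> W m" if "a \<in> W (Suc m)" "b \<in> W (Suc m)" for m a b
      using W(2)[of m] that by (simp add: Q_def)
    fix U' assume "openin T U'" "0 \<in> U'"
    then obtain N where N: "\<forall>m\<ge>N. B m \<subseteq> U'" using B(3) by blast
    have "W m \<subseteq> U'" if m: "m \<ge> Suc N" for m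
    proof -
      from m obtain k where "m = Suc k" "k \<ge> N" by (cases m) auto
      moreover have "W (Suc k) \<subseteq> B k" using W(2)[of k] by (simp add: Q_def)
      ultimately show ?thesis using N by blast
    qed
    then show "\<exists>N. \<forall>m\<ge>N. W m \<subseteq> U'" by blast
  qed
qed

lemma approximating_sequence:
  assumes V: "\<And>m. openin T (V m)" "\<And>m. 0 \<in> V m" "\<And>m. V m \<subseteq> T closure_of (A m)"
    and x: "x \<in> V 1"
  obtains s where "s 0 = 0" "\<And>m. s m \<in> X"
    "\<And>m. s (Suc m) - s m \<in> A (Suc m)" "\<And>m. x - s m \<in> V (Suc m)"
proof -
  have xX: "x \<in> X" using x V(1) openin_subset_carrier by blast
  define P where "P (m::nat) y \<longleftrightarrow> y \<in> X \<and> x - y \<in> V (Suc m) \<and> (m = 0 \<longrightarrow> y = 0)" for m y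
  define Q where "Q m y y' \<longleftrightarrow> y' - y \<in> A (Suc m)" for m y y'
  have step: "\<exists>y'. P (Suc m) y' \<and> Q m y y'" if "P m y" for m y
  proof -
    have z: "x - y \<in> X" "x - y \<in> T closure_of (A (Suc m))" using that xX V(3) by (auto simp: P_def)
    define N where "N = {a \<in> X. (x - y) - a \<in> V (Suc (Suc m))}"
    have "openin T N" "x - y \<in> N"
      using openin_translate_preimage(3)[OF z(1) V(1)] z(1) V(2) by (simp_all add: N_def)
    then obtain a where "a \<in> A (Suc m)" "a \<in> N"
      using z(2) unfolding in_closure_of by blast
    then have a: "a \<in> A (Suc m)" "a \<in> X" "(x - y) - a \<in> V (Suc (Suc m))"
      by (simp_all add: N_def)
    have "x - (y + a) \<in> V (Suc (Suc m))" using a(3) by (simp only: diff_diff_eq)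
    then have "P (Suc m) (y + a)" using that a(2) by (simp add: P_def)
    moreover have "Q m y (y + a)" using a by (simp add: Q_def)
    ultimately show ?thesis by blast
  qed
  have start: "\<exists>y. P 0 y" using x xX by (auto simp: P_def)
  obtain s where s: "\<And>m. P m (s m)" "\<And>m. Q m (s m) (s (Suc m))"
    using dependent_nat_choice[of P Q, OF start step] by auto
  show thesis
    by (rule that[of s]) (use s in \<open>simp_all add: P_def Q_def\<close>)
qed

lemma limitin_if_differences_in_base:
  assumes "\<And>U. openin T U \<Longrightarrow> 0 \<in> U \<Longrightarrow> \<exists>N. \<forall>m\<ge>N. B m \<subseteq> U"
    and "x \<in> X" "\<And>n. x - s n \<in> B n"
  shows "limitin T s x sequentially"
proof -
  have lim: "limitin T (\<lambda>n. x - s n) 0 sequentially"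
    unfolding limitin_def eventually_sequentially
  proof (intro conjI allI impI)
    fix U assume "openin T U \<and> 0 \<in> U"
    then obtain N where "\<forall>m\<ge>N. B m \<subseteq> U" using assms(1) by blast
    then show "\<exists>N. \<forall>n\<ge>N. x - s n \<in> U" using assms(3) by blast
  qed simp
  have "limitin T ((\<lambda>w. x - w) \<circ> (\<lambda>n. x - s n)) (x - 0) sequentially"
    by (rule continuous_map_limit[OF continuous_map_translations(3)[OF assms(2)] lim])
  then show ?thesis by (simp add: o_def)
qed

end

locale F_space_inclusion = Y: seq_F_space Y S + X: seq_F_space X T
  for Y S X T +
  assumes subset: "Y \<subseteq> X"
begin

lemma interior_closure_of_multiples:
  assumes W: "openin T W" "0 \<in> W"
  shows "\<exists>n. S interior_of (S closure_of ((\<lambda>y. of_nat (Suc n) *\<^sub>s y) ` (W \<inter> Y))) \<noteq> {}"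
proof -
  define A where "A n = S closure_of ((\<lambda>y. of_nat (Suc n) *\<^sub>s y) ` (W \<inter> Y))" for n
  have "Y \<subseteq> (\<Union>n. A n)"
  proof
    fix y assume y: "y \<in> Y"
    then obtain n where n: "(1 / of_nat (Suc n)) *\<^sub>s y \<in> W"
      using X.absorbing[OF W] subset by blast
    have "y = of_nat (Suc n) *\<^sub>s (1 / of_nat (Suc n)) *\<^sub>s y" by (simp del: of_nat_Suc)
    then have "y \<in> (\<lambda>y. of_nat (Suc n) *\<^sub>s y) ` (W \<inter> Y)"
      using n y by (intro image_eqI[where x="(1 / of_nat (Suc n)) *\<^sub>s y"]) simp_all
    moreover have "(\<lambda>y. of_nat (Suc n) *\<^sub>s y) ` (W \<inter> Y) \<subseteq> topspace S" by auto
    ultimately have "y \<in> A n" unfolding A_def using closure_of_subset by blast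
    then show "y \<in> (\<Union>n. A n)" by blast
  qed
  then show ?thesis
    using Y.completely_metrizable Y.zero_mem unfolding A_def[symmetric]
    by (intro Baire_nonempty_interior) (auto simp: A_def simp del: Y.zero_mem)
qed

lemma almost_continuous:
  assumes W: "openin T W" "0 \<in> W"
  shows "\<exists>V. openin S V \<and> 0 \<in> V \<and> V \<subseteq> S closure_of (W \<inter> Y)"
proof -
  obtain W' where W': "openin T W'" "0 \<in> W'" "\<forall>a\<in>W'. \<forall>b\<in>W'. a - b \<in> W"
    using X.zero_neighbourhood_diff[OF W] by blast
  define A where "A n = S closure_of ((\<lambda>y. of_nat (Suc n) *\<^sub>s y) ` (W' \<inter> Y))" for n
  obtain n y0 where y0: "y0 \<in> S interior_of A n"
    using interior_closure_of_multiples[OF W'(1,2)] unfolding A_def by blast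
  define c :: complex where "c = of_nat (Suc n)"
  define G where "G = {y \<in> Y. c *\<^sub>s y \<in> S interior_of A n}"
  have "G \<subseteq> S closure_of (W' \<inter> Y)"
  proof
    fix y assume "y \<in> G"
    then have "c *\<^sub>s y \<in> A n" using interior_of_subset[of S "A n"] by (auto simp: G_def)
    then have "(1 / c) *\<^sub>s c *\<^sub>s y \<in> (\<lambda>y. (1 / c) *\<^sub>s y) ` A n" by (rule imageI)
    also have "\<dots> \<subseteq> S closure_of ((\<lambda>y. (1 / c) *\<^sub>s y) ` (\<lambda>y. c *\<^sub>s y) ` (W' \<inter> Y))"
      unfolding A_def c_def by (rule continuous_map_image_closure_subset[OF Y.continuous_map_scale_const])
    finally show "y \<in> S closure_of (W' \<inter> Y)" by (simp add: c_def image_image del: of_nat_Suc)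
  qed
  moreover have "openin S G" "(1 / c) *\<^sub>s y0 \<in> G"
    using Y.openin_preimage[OF Y.continuous_map_scale_const, of "S interior_of A n" c] y0
      interior_of_subset_topspace[of S "A n"] by (auto simp: G_def c_def simp del: of_nat_Suc)
  ultimately obtain V where V: "openin S V" "0 \<in> V"
    "V \<subseteq> S closure_of ((\<lambda>(a, b). a - b) ` ((W' \<inter> Y) \<times> (W' \<inter> Y)))"
    by (metis Y.closure_of_differences_zero_neighbourhood)
  have "(\<lambda>(a, b). a - b) ` ((W' \<inter> Y) \<times> (W' \<inter> Y)) \<subseteq> W \<inter> Y" using W' by auto
  then have "S closure_of ((\<lambda>(a, b). a - b) ` ((W' \<inter> Y) \<times> (W' \<inter> Y))) \<subseteq> S closure_of (W \<inter> Y)"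
    by (rule closure_of_mono)
  then show ?thesis using V by blast
qed

text \<open>The core of the closed graph argument: x \<in> V 1 is the S-limit of partial sums with
  increments in W (Suc m) \<inter> Y.  By Klee's lemma these sums also converge in T, necessarily to x since
  both topologies have continuous coordinates, and the halving property of W puts x into U.\<close>

lemma approximated_neighbourhood_subset:
  assumes W: "\<And>m. openin T (W m)" "\<And>m. 0 \<in> W m"
      "\<And>a b. a \<in> W 0 \<Longrightarrow> b \<in> W 0 \<Longrightarrow> a + b \<in> U"
      "\<And>m a b. a \<in> W (Suc m) \<Longrightarrow> b \<in> W (Suc m) \<Longrightarrow> a + b \<in> W m"
      "\<And>U'. openin T U' \<Longrightarrow> 0 \<in> U' \<Longrightarrow> \<exists>N. \<forall>m\<ge>N. W m \<subseteq> U'"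
    and V: "\<And>m. openin S (V m)" "\<And>m. 0 \<in> V m" "\<And>m. V m \<subseteq> S closure_of (W m \<inter> Y)"
      "\<And>U'. openin S U' \<Longrightarrow> 0 \<in> U' \<Longrightarrow> \<exists>N. \<forall>m\<ge>N. V m \<subseteq> U'"
  shows "V 1 \<subseteq> U"
proof
  fix x assume "x \<in> V 1"
  obtain s where s: "s 0 = 0" "\<And>m. s m \<in> Y"
    "\<And>m. s (Suc m) - s m \<in> W (Suc m) \<inter> Y" "\<And>m. x - s m \<in> V (Suc m)"
    using Y.approximating_sequence[where V=V and A="\<lambda>m. W m \<inter> Y", OF V(1-3) \<open>x \<in> V 1\<close>] by metis
  have x: "x \<in> Y" using \<open>x \<in> V 1\<close> V(1) Y.openin_subset_carrier by blast
  have tele: "s (m + k) - s m \<in> W m" for m k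
    using telescoping_mem[where W=W and s=s, OF W(2,4)] s(3) by blast
  have "tvs_Cauchy T s" by (rule tvs_Cauchy_if_telescoping[where W=W, OF W(5) tele])
  moreover have "range s \<subseteq> X" using s(2) subset by blast
  ultimately obtain z where z: "limitin T s z sequentially"
    using X.tvs_Cauchy_convergent[OF X.completely_metrizable] by blast
  have "\<exists>N. \<forall>m\<ge>N. V (Suc m) \<subseteq> U'" if U': "openin S U'" "0 \<in> U'" for U'
  proof -
    obtain N where "\<forall>m\<ge>N. V m \<subseteq> U'" using V(4)[OF U'] by blast
    then have "\<forall>m\<ge>N. V (Suc m) \<subseteq> U'" using le_SucI by blast
    then show ?thesis by blast
  qed
  then have "limitin S s x sequentially"
    by (rule Y.limitin_if_differences_in_base[where B="\<lambda>m. V (Suc m)", OF _ x s(4)])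
  then have "x = z"
    by (rule limit_unique_by_coordinates[OF Y.continuous_coordinate X.continuous_coordinate _ z])
  have "x \<in> X" using x subset by blast
  have "limitin T ((\<lambda>w. x - w) \<circ> s) (x - z) sequentially"
    using continuous_map_limit[OF X.continuous_map_translations(3)[OF \<open>x \<in> X\<close>] z] .
  then have "limitin T (\<lambda>n. x - s n) 0 sequentially" using \<open>x = z\<close> by (simp add: o_def)
  then have "\<forall>\<^sub>F n in sequentially. x - s n \<in> W 0"
    using limitinD[OF _ W(1)[of 0] W(2)[of 0]] by blast
  then obtain n where n: "x - s n \<in> W 0" unfolding eventually_sequentially by blast
  have "s n \<in> W 0" using tele[of 0 n] s(1) by simp
  then have "s n + (x - s n) \<in> U" using W(3)[OF _ n] by blast
  then show "x \<in> U" by simp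
qed

lemma continuous_at_zero:
  assumes U: "openin T U" "0 \<in> U"
  shows "\<exists>V. openin S V \<and> 0 \<in> V \<and> V \<subseteq> U"
proof -
  obtain W :: "nat \<Rightarrow> seq set" where W: "\<And>m. openin T (W m)" "\<And>m. 0 \<in> W m"
      "\<And>a b. a \<in> W 0 \<Longrightarrow> b \<in> W 0 \<Longrightarrow> a + b \<in> U"
      "\<And>m a b. a \<in> W (Suc m) \<Longrightarrow> b \<in> W (Suc m) \<Longrightarrow> a + b \<in> W m"
      "\<And>U'. openin T U' \<Longrightarrow> 0 \<in> U' \<Longrightarrow> \<exists>N. \<forall>m\<ge>N. W m \<subseteq> U'"
    using X.halving_zero_neighbourhood_base[OF X.metrizable U] by metis
  obtain B :: "nat \<Rightarrow> seq set" where B: "\<And>n. openin S (B n)" "\<And>n. 0 \<in> B n"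
      "\<And>U'. openin S U' \<Longrightarrow> 0 \<in> U' \<Longrightarrow> \<exists>n. \<forall>m\<ge>n. B m \<subseteq> U'"
    using Y.zero_neighbourhood_base[OF Y.metrizable] by metis
  obtain V0 where V0: "\<And>m. openin S (V0 m)" "\<And>m. 0 \<in> V0 m" "\<And>m. V0 m \<subseteq> S closure_of (W m \<inter> Y)"
    using almost_continuous[OF W(1,2)] by metis
  define V where "V m = V0 m \<inter> B m" for m
  have "V 1 \<subseteq> U"
  proof (rule approximated_neighbourhood_subset[OF W])
    show "openin S (V m)" "0 \<in> V m" "V m \<subseteq> S closure_of (W m \<inter> Y)" for m
      using V0 B by (auto simp: V_def)
    show "\<exists>N. \<forall>m\<ge>N. V m \<subseteq> U'" if "openin S U'" "0 \<in> U'" for U'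
      using B(3)[OF that] by (auto simp: V_def)
  qed
  moreover have "openin S (V 1)" "0 \<in> V 1" using V0 B by (auto simp: V_def)
  ultimately show ?thesis by blast
qed

lemma continuous_inclusion: "continuous_map S T (\<lambda>x. x)"
  unfolding continuous_map_def
proof (intro conjI allI impI)
  show "(\<lambda>x. x) \<in> topspace S \<rightarrow> topspace T" using subset by auto
  fix U assume U: "openin T U"
  show "openin S {x \<in> topspace S. x \<in> U}"
  proof (subst openin_subopen, intro ballI)
    fix y assume "y \<in> {x \<in> topspace S. x \<in> U}"
    then have y: "y \<in> Y" "y \<in> X" "y \<in> U" using subset by auto
    have "0 \<in> {w \<in> X. y + w \<in> U}" using y by simp
    then obtain V where V: "openin S V" "0 \<in> V" "V \<subseteq> {w \<in> X. y + w \<in> U}"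
      using continuous_at_zero[OF X.openin_translate_preimage(1)[OF y(2) U]] by blast
    define N where "N = {v \<in> Y. v - y \<in> V}"
    have "openin S N" "y \<in> N" using Y.openin_translate_preimage(2)[OF y(1) V(1)] y(1) V(2)
      by (simp_all add: N_def)
    moreover have "N \<subseteq> {x \<in> topspace S. x \<in> U}"
    proof
      fix v assume "v \<in> N"
      then have "v \<in> Y" "y + (v - y) \<in> U" using V(3) by (auto simp: N_def)
      then show "v \<in> {x \<in> topspace S. x \<in> U}" by simp
    qed
    ultimately show "\<exists>N. openin S N \<and> y \<in> N \<and> N \<subseteq> {x \<in> topspace S. x \<in> U}" by blast
  qed
qed

end

section \<open>The Hahn-Banach theorem\<close>

definition real_linear_on :: "seq set \<Rightarrow> (seq \<Rightarrow> real) \<Rightarrow> bool" where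
  "real_linear_on X u \<longleftrightarrow> (\<forall>x\<in>X. \<forall>y\<in>X. u (x + y) = u x + u y) \<and>
     (\<forall>r. \<forall>x\<in>X. u (of_real r *\<^sub>s x) = r * u x)"

definition sublinear_on :: "seq set \<Rightarrow> (seq \<Rightarrow> real) \<Rightarrow> bool" where
  "sublinear_on X p \<longleftrightarrow> (\<forall>x\<in>X. \<forall>y\<in>X. p (x + y) \<le> p x + p y) \<and>
     (\<forall>r>0. \<forall>x\<in>X. p (of_real r *\<^sub>s x) = r * p x)"

lemma sublinear_onD:
  assumes "sublinear_on X p"
  shows "x \<in> X \<Longrightarrow> y \<in> X \<Longrightarrow> p (x + y) \<le> p x + p y"
    "r > 0 \<Longrightarrow> x \<in> X \<Longrightarrow> p (of_real r *\<^sub>s x) = r * p x"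
  using assms unfolding sublinear_on_def by blast+

text \<open>Partially defined real-linear functionals below p are represented by their graphs, so that
  Zorn's lemma can be applied to set inclusion.\<close>

definition dominated_linear_graph :: "seq set \<Rightarrow> (seq \<Rightarrow> real) \<Rightarrow> (seq \<times> real) set \<Rightarrow> bool" where
  "dominated_linear_graph X p G \<longleftrightarrow> G \<subseteq> X \<times> UNIV \<and> (0, 0) \<in> G \<and>
     (\<forall>x a b. (x, a) \<in> G \<longrightarrow> (x, b) \<in> G \<longrightarrow> a = b) \<and>
     (\<forall>x a y b. (x, a) \<in> G \<longrightarrow> (y, b) \<in> G \<longrightarrow> (x + y, a + b) \<in> G) \<and>
     (\<forall>x a r. (x, a) \<in> G \<longrightarrow> (of_real r *\<^sub>s x, r * a) \<in> G) \<and>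
     (\<forall>x a. (x, a) \<in> G \<longrightarrow> a \<le> p x)"

lemma dominated_linear_graphD:
  assumes "dominated_linear_graph X p G"
  shows "(x, a) \<in> G \<Longrightarrow> x \<in> X" "(0, 0) \<in> G"
    "(x, a) \<in> G \<Longrightarrow> (x, b) \<in> G \<Longrightarrow> a = b"
    "(x, a) \<in> G \<Longrightarrow> (y, b) \<in> G \<Longrightarrow> (x + y, a + b) \<in> G"
    "(x, a) \<in> G \<Longrightarrow> (of_real r *\<^sub>s x, r * a) \<in> G"
    "(x, a) \<in> G \<Longrightarrow> a \<le> p x"
  using assms unfolding dominated_linear_graph_def by blast+

lemma dominated_linear_graph_Union:
  assumes "C \<noteq> {}" and C: "\<And>G. G \<in> C \<Longrightarrow> dominated_linear_graph X p G"
    and chain: "\<And>G H. G \<in> C \<Longrightarrow> H \<in> C \<Longrightarrow> G \<subseteq> H \<or> H \<subseteq> G"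
  shows "dominated_linear_graph X p (\<Union>C)"
proof -
  have two: "\<exists>G\<in>C. (x, a) \<in> G \<and> (y, b) \<in> G" if xy: "(x, a) \<in> \<Union>C" "(y, b) \<in> \<Union>C" for x a y b
  proof -
    obtain G H where "G \<in> C" "(x, a) \<in> G" "H \<in> C" "(y, b) \<in> H" using xy by blast
    then show ?thesis using chain[of G H] by blast
  qed
  obtain G0 where "G0 \<in> C" using assms(1) by blast
  show ?thesis
    unfolding dominated_linear_graph_def
  proof (intro conjI allI impI subsetI)
    show "(0, 0) \<in> \<Union>C" using dominated_linear_graphD(2)[OF C[OF \<open>G0 \<in> C\<close>]] \<open>G0 \<in> C\<close> by blast
  next
    fix z assume "z \<in> \<Union>C"
    then show "z \<in> X \<times> UNIV" using dominated_linear_graphD(1)[OF C] by (cases z) blast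
  next
    fix x a b assume "(x, a) \<in> \<Union>C" "(x, b) \<in> \<Union>C"
    then obtain G where "G \<in> C" "(x, a) \<in> G" "(x, b) \<in> G" using two by blast
    then show "a = b" using dominated_linear_graphD(3)[OF C] by blast
  next
    fix x a y b assume "(x, a) \<in> \<Union>C" "(y, b) \<in> \<Union>C"
    then obtain G where "G \<in> C" "(x, a) \<in> G" "(y, b) \<in> G" using two by blast
    then show "(x + y, a + b) \<in> \<Union>C" using dominated_linear_graphD(4)[OF C] by blast
  next
    fix x a r assume "(x, a) \<in> \<Union>C"
    then show "(of_real r *\<^sub>s x, r * a) \<in> \<Union>C" using dominated_linear_graphD(5)[OF C] by blast
  next
    fix x a assume "(x, a) \<in> \<Union>C"
    then show "a \<le> p x" using dominated_linear_graphD(6)[OF C] by blast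
  qed
qed

text \<open>The value c assigned to a new point x0 in the one-step extension of Hahn-Banach.\<close>

lemma dominated_extension_constant:
  assumes X: "linear_subspace X" and p: "sublinear_on X p" and G: "dominated_linear_graph X p G"
    and "x0 \<in> X"
  obtains c where "\<And>y a. (y, a) \<in> G \<Longrightarrow> a - p (y - x0) \<le> c"
    "\<And>z b. (z, b) \<in> G \<Longrightarrow> c \<le> p (z + x0) - b"
proof -
  have bound: "a - p (y - x0) \<le> p (z + x0) - b" if "(y, a) \<in> G" "(z, b) \<in> G" for y a z b
  proof -
    have "y \<in> X" "z \<in> X" "(y + z, a + b) \<in> G"
      using dominated_linear_graphD(1,4)[OF G] that by blast+
    then have "a + b \<le> p (y + z)" using dominated_linear_graphD(6)[OF G] by blast
    also have "y + z = (y - x0) + (z + x0)" by simp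
    also have "p \<dots> \<le> p (y - x0) + p (z + x0)"
      using \<open>y \<in> X\<close> \<open>z \<in> X\<close> \<open>x0 \<in> X\<close>
      by (intro sublinear_onD(1)[OF p] linear_subspace_closed[OF X])
    finally show ?thesis by simp
  qed
  define L where "L = {a - p (y - x0) | y a. (y, a) \<in> G}"
  have "(0, 0) \<in> G" by (rule dominated_linear_graphD(2)[OF G])
  then have "L \<noteq> {}" "bdd_above L" unfolding L_def bdd_above_def using bound by blast+
  then show thesis using bound
    by (intro that[of "Sup L"]) (auto simp: L_def intro!: cSup_upper cSup_least)
qed

lemma dominated_extension_le:
  assumes X: "linear_subspace X" and p: "sublinear_on X p" and G: "dominated_linear_graph X p G"
    and x0: "x0 \<in> X"
    and c: "\<And>y a. (y, a) \<in> G \<Longrightarrow> a - p (y - x0) \<le> c" "\<And>z b. (z, b) \<in> G \<Longrightarrow> c \<le> p (z + x0) - b"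
    and ya: "(y, a) \<in> G"
  shows "a + r * c \<le> p (y + of_real r *\<^sub>s x0)"
proof -
  have y: "y \<in> X" by (rule dominated_linear_graphD(1)[OF G ya])
  consider "r = 0" | "r > 0" | "r < 0" by linarith
  then show ?thesis
  proof cases
    case 1
    then show ?thesis using dominated_linear_graphD(6)[OF G ya] by simp
  next
    case 2
    define z where "z = of_real (1 / r) *\<^sub>s y + x0"
    have "(of_real (1 / r) *\<^sub>s y, (1 / r) * a) \<in> G" by (rule dominated_linear_graphD(5)[OF G ya])
    then have "c \<le> p z - (1 / r) * a" unfolding z_def by (rule c(2))
    then have "a + r * c \<le> r * p z" using 2 by (simp add: field_simps)
    also have "\<dots> = p (of_real r *\<^sub>s z)"
      using 2 y x0 by (simp add: z_def sublinear_onD(2)[OF p] linear_subspace_closed[OF X])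
    also have "of_real r *\<^sub>s z = y + of_real r *\<^sub>s x0"
      using 2 by (simp add: z_def scale_seq_add_right)
    finally show ?thesis .
  next
    case 3
    define s where "s = - r"
    define z where "z = of_real (1 / s) *\<^sub>s y - x0"
    have s: "s > 0" using 3 by (simp add: s_def)
    have "(of_real (1 / s) *\<^sub>s y, (1 / s) * a) \<in> G" by (rule dominated_linear_graphD(5)[OF G ya])
    then have "(1 / s) * a - p z \<le> c" unfolding z_def by (rule c(1))
    then have "a + r * c \<le> s * p z" using s by (simp add: s_def field_simps)
    also have "\<dots> = p (of_real s *\<^sub>s z)"
      using s y x0 by (simp add: z_def sublinear_onD(2)[OF p] linear_subspace_closed[OF X])
    also have "of_real s *\<^sub>s z = y + of_real r *\<^sub>s x0"
      using s by (simp add: z_def s_def scale_seq_diff_right fun_eq_iff)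
    finally show ?thesis .
  qed
qed

lemma dominated_extension_unique:
  assumes G: "dominated_linear_graph X p G" and x0: "\<nexists>a. (x0, a) \<in> G"
    and ya: "(y1, a1) \<in> G" "(y2, a2) \<in> G"
    and eq: "y1 + of_real r1 *\<^sub>s x0 = y2 + of_real r2 *\<^sub>s x0"
  shows "r1 = r2 \<and> y1 = y2"
proof -
  have "r1 = r2"
  proof (rule ccontr)
    assume ne: "r1 \<noteq> r2"
    have "(of_real (-1) *\<^sub>s y1, (-1) * a1) \<in> G" by (rule dominated_linear_graphD(5)[OF G ya(1)])
    then have "(y2 + of_real (-1) *\<^sub>s y1, a2 + (-1) * a1) \<in> G"
      by (rule dominated_linear_graphD(4)[OF G ya(2)])
    then have "(of_real (1 / (r1 - r2)) *\<^sub>s (y2 + of_real (-1) *\<^sub>s y1), (1 / (r1 - r2)) * (a2 + (-1) * a1)) \<in> G"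
      by (rule dominated_linear_graphD(5)[OF G])
    moreover have "of_real (1 / (r1 - r2)) *\<^sub>s (y2 + of_real (-1) *\<^sub>s y1) = x0"
    proof
      fix i
      have "y1 i + of_real r1 * x0 i = y2 i + of_real r2 * x0 i" using fun_cong[OF eq, of i] by simp
      moreover have "complex_of_real r1 - of_real r2 \<noteq> 0" using ne by simp
      ultimately show "(of_real (1 / (r1 - r2)) *\<^sub>s (y2 + of_real (-1) *\<^sub>s y1)) i = x0 i"
        by (simp add: field_simps)
    qed
    ultimately show False using x0 by auto
  qed
  moreover have "y1 = y2" using eq \<open>r1 = r2\<close> by simp
  ultimately show ?thesis by blast
qed

lemma dominated_linear_graph_extend:
  assumes X: "linear_subspace X" and p: "sublinear_on X p" and G: "dominated_linear_graph X p G"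
    and x0: "x0 \<in> X" "\<nexists>a. (x0, a) \<in> G"
    and c: "\<And>y a. (y, a) \<in> G \<Longrightarrow> a - p (y - x0) \<le> c" "\<And>z b. (z, b) \<in> G \<Longrightarrow> c \<le> p (z + x0) - b"
  shows "dominated_linear_graph X p {(y + of_real r *\<^sub>s x0, a + r * c) | y a r. (y, a) \<in> G}"
    (is "dominated_linear_graph X p ?G")
  unfolding dominated_linear_graph_def
proof (intro conjI allI impI subsetI)
  fix z assume "z \<in> ?G"
  then show "z \<in> X \<times> UNIV"
    using dominated_linear_graphD(1)[OF G] x0(1) linear_subspace_closed[OF X] by auto
next
  have "(0 + of_real 0 *\<^sub>s x0, 0 + 0 * c) \<in> ?G" using dominated_linear_graphD(2)[OF G] by blast
  then show "(0, 0) \<in> ?G" by simp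
next
  fix x a b assume "(x, a) \<in> ?G" "(x, b) \<in> ?G"
  then obtain y1 a1 r1 y2 a2 r2 where "(y1, a1) \<in> G" "(y2, a2) \<in> G"
    "x = y1 + of_real r1 *\<^sub>s x0" "a = a1 + r1 * c" "x = y2 + of_real r2 *\<^sub>s x0" "b = a2 + r2 * c"
    by blast
  then show "a = b" using dominated_extension_unique[OF G x0(2)] dominated_linear_graphD(3)[OF G]
    by metis
next
  fix x a x' b assume "(x, a) \<in> ?G" "(x', b) \<in> ?G"
  then obtain y1 a1 r1 y2 a2 r2 where "(y1, a1) \<in> G" "(y2, a2) \<in> G"
    "x = y1 + of_real r1 *\<^sub>s x0" "a = a1 + r1 * c" "x' = y2 + of_real r2 *\<^sub>s x0" "b = a2 + r2 * c"
    by blast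
  moreover have "x + x' = (y1 + y2) + of_real (r1 + r2) *\<^sub>s x0" "a + b = (a1 + a2) + (r1 + r2) * c"
    using calculation(3-6) by (simp_all add: scale_seq_add_left algebra_simps)
  moreover have "(y1 + y2, a1 + a2) \<in> G" by (rule dominated_linear_graphD(4)[OF G calculation(1,2)])
  ultimately show "(x + x', a + b) \<in> ?G" by blast
next
  fix x a t assume "(x, a) \<in> ?G"
  then obtain y a1 r where "(y, a1) \<in> G" "x = y + of_real r *\<^sub>s x0" "a = a1 + r * c" by blast
  moreover have "of_real t *\<^sub>s x = of_real t *\<^sub>s y + of_real (t * r) *\<^sub>s x0" "t * a = t * a1 + (t * r) * c"
    using calculation(2,3) by (simp_all add: scale_seq_add_right algebra_simps)
  moreover have "(of_real t *\<^sub>s y, t * a1) \<in> G" by (rule dominated_linear_graphD(5)[OF G calculation(1)])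
  ultimately show "(of_real t *\<^sub>s x, t * a) \<in> ?G" by blast
next
  fix x a assume "(x, a) \<in> ?G"
  then obtain y a1 r where "(y, a1) \<in> G" "x = y + of_real r *\<^sub>s x0" "a = a1 + r * c" by blast
  then show "a \<le> p x" using dominated_extension_le[OF X p G x0(1) c] by blast
qed

lemma dominated_linear_graph_of_functional:
  assumes P: "linear_subspace P" "P \<subseteq> X" and u: "real_linear_on P u" "\<And>x. x \<in> P \<Longrightarrow> u x \<le> p x"
  shows "dominated_linear_graph X p ((\<lambda>x. (x, u x)) ` P)" (is "dominated_linear_graph X p ?G")
proof -
  have add: "u (x + y) = u x + u y" and scale: "u (of_real r *\<^sub>s x) = r * u x"
    if "x \<in> P" "y \<in> P" for x y r
    using u(1) that unfolding real_linear_on_def by blast+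
  note closed = linear_subspace_closed[OF P(1)]
  show ?thesis
    unfolding dominated_linear_graph_def
  proof (intro conjI allI impI subsetI)
    fix z assume "z \<in> ?G"
    then show "z \<in> X \<times> UNIV" using P(2) by auto
  next
    have "u 0 = 0" using scale[of 0 0 0] closed(1) by simp
    then show "(0, 0) \<in> ?G" using closed(1) by (intro rev_image_eqI[of 0]) simp_all
  next
    fix x a b assume "(x, a) \<in> ?G" "(x, b) \<in> ?G"
    then show "a = b" by auto
  next
    fix x a y b assume "(x, a) \<in> ?G" "(y, b) \<in> ?G"
    then have "x \<in> P" "y \<in> P" "a = u x" "b = u y" by auto
    then show "(x + y, a + b) \<in> ?G" by (intro rev_image_eqI[of "x + y"]) (simp_all add: add closed)
  next
    fix x a r assume "(x, a) \<in> ?G"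
    then have "x \<in> P" "a = u x" by auto
    then show "(of_real r *\<^sub>s x, r * a) \<in> ?G"
      by (intro rev_image_eqI[of "of_real r *\<^sub>s x"]) (simp_all add: scale closed)
  next
    fix x a assume "(x, a) \<in> ?G"
    then show "a \<le> p x" using u(2) by auto
  qed
qed

lemma maximal_dominated_linear_graph_total:
  assumes X: "linear_subspace X" and p: "sublinear_on X p" and M: "dominated_linear_graph X p M"
    and max: "\<And>G. dominated_linear_graph X p G \<Longrightarrow> M \<subseteq> G \<Longrightarrow> G = M"
    and "x0 \<in> X"
  shows "\<exists>a. (x0, a) \<in> M"
proof (rule ccontr)
  assume x0: "\<nexists>a. (x0, a) \<in> M"
  obtain c where c: "\<And>y a. (y, a) \<in> M \<Longrightarrow> a - p (y - x0) \<le> c"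
    "\<And>z b. (z, b) \<in> M \<Longrightarrow> c \<le> p (z + x0) - b"
    using dominated_extension_constant[OF X p M \<open>x0 \<in> X\<close>] by metis
  define M' where "M' = {(y + of_real r *\<^sub>s x0, a + r * c) | y a r. (y, a) \<in> M}"
  have M': "dominated_linear_graph X p M'"
    unfolding M'_def by (rule dominated_linear_graph_extend[OF X p M \<open>x0 \<in> X\<close> x0 c])
  have "M \<subseteq> M'"
  proof
    fix z assume "z \<in> M"
    moreover obtain y a where "z = (y, a)" by fastforce
    ultimately have "(y + of_real 0 *\<^sub>s x0, a + 0 * c) \<in> M'" unfolding M'_def by blast
    then show "z \<in> M'" using \<open>z = (y, a)\<close> by simp
  qed
  then have "M' = M" by (rule max[OF M'])
  moreover have "(0 + of_real 1 *\<^sub>s x0, 0 + 1 * c) \<in> M'"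
    using dominated_linear_graphD(2)[OF M] unfolding M'_def by blast
  ultimately show False using x0 by simp
qed

lemma maximal_dominated_linear_graph_exists:
  assumes "dominated_linear_graph X p G0"
  obtains M where "dominated_linear_graph X p M" "G0 \<subseteq> M"
    "\<And>G. dominated_linear_graph X p G \<Longrightarrow> M \<subseteq> G \<Longrightarrow> G = M"
proof -
  define F where "F = {G. dominated_linear_graph X p G \<and> G0 \<subseteq> G}"
  have "\<exists>M\<in>F. \<forall>G\<in>F. M \<subseteq> G \<longrightarrow> G = M"
  proof (rule Zorn_Lemma2, intro ballI)
    fix C assume C: "C \<in> chains F"
    show "\<exists>M\<in>F. \<forall>G\<in>C. G \<subseteq> M"
    proof (cases "C = {}")
      case True
      then show ?thesis using assms unfolding F_def by blast
    next
      case False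
      have "C \<subseteq> F" "\<And>G H. G \<in> C \<Longrightarrow> H \<in> C \<Longrightarrow> G \<subseteq> H \<or> H \<subseteq> G"
        using C unfolding chains_def chain_subset_def by blast+
      then have "dominated_linear_graph X p (\<Union>C)" "G0 \<subseteq> \<Union>C"
        using dominated_linear_graph_Union[OF False, of X p] False unfolding F_def by blast+
      then show ?thesis unfolding F_def by blast
    qed
  qed
  then obtain M where M: "M \<in> F" and max: "\<And>G. G \<in> F \<Longrightarrow> M \<subseteq> G \<Longrightarrow> G = M" by blast
  show thesis
  proof (rule that)
    show "dominated_linear_graph X p M" "G0 \<subseteq> M" using M by (simp_all add: F_def)
    show "G = M" if "dominated_linear_graph X p G" "M \<subseteq> G" for G
      using max[of G] that M unfolding F_def by blast
  qed
qed

theorem hahn_banach_real: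
  assumes X: "linear_subspace X" and P: "linear_subspace P" "P \<subseteq> X" and p: "sublinear_on X p"
    and u: "real_linear_on P u" "\<And>x. x \<in> P \<Longrightarrow> u x \<le> p x"
  shows "\<exists>U. real_linear_on X U \<and> (\<forall>x\<in>X. U x \<le> p x) \<and> (\<forall>x\<in>P. U x = u x)"
proof -
  define G0 where "G0 = (\<lambda>x. (x, u x)) ` P"
  have G0: "dominated_linear_graph X p G0"
    unfolding G0_def by (rule dominated_linear_graph_of_functional[OF P u])
  obtain M where M: "dominated_linear_graph X p M" "G0 \<subseteq> M"
    and max: "\<And>G. dominated_linear_graph X p G \<Longrightarrow> M \<subseteq> G \<Longrightarrow> G = M"
    using maximal_dominated_linear_graph_exists[OF G0] by metis
  have "\<exists>a. (x, a) \<in> M" if "x \<in> X" for x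
    by (rule maximal_dominated_linear_graph_total[OF X p M(1) max that])
  then obtain U where UM: "\<And>x. x \<in> X \<Longrightarrow> (x, U x) \<in> M" by metis
  have U: "U x = a" if "(x, a) \<in> M" for x a
    using dominated_linear_graphD(1,3)[OF M(1)] UM that by blast
  have "U (x + y) = U x + U y" if "x \<in> X" "y \<in> X" for x y
    using U[OF dominated_linear_graphD(4)[OF M(1) UM[OF that(1)] UM[OF that(2)]]] .
  moreover have "U (of_real r *\<^sub>s x) = r * U x" if "x \<in> X" for r x
    using U[OF dominated_linear_graphD(5)[OF M(1) UM[OF that]]] .
  ultimately have "real_linear_on X U" unfolding real_linear_on_def by blast
  moreover have "U x \<le> p x" if "x \<in> X" for x using dominated_linear_graphD(6)[OF M(1) UM[OF that]] .
  moreover have "U x = u x" if "x \<in> P" for x using U M(2) that unfolding G0_def by blast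
  ultimately show ?thesis by blast
qed

section \<open>Extension of continuous linear functionals\<close>

lemma linear_onD:
  assumes "linear_on X f"
  shows "x \<in> X \<Longrightarrow> y \<in> X \<Longrightarrow> f (x + y) = f x + f y" "x \<in> X \<Longrightarrow> f (c *\<^sub>s x) = c * f x"
  using assms unfolding linear_on_def by blast+

lemma linear_on_zero: "linear_subspace X \<Longrightarrow> linear_on X f \<Longrightarrow> f 0 = 0"
  using linear_onD(2)[of X f 0 0] linear_subspace_closed(1) by simp

lemma linear_on_diff:
  assumes "linear_subspace X" "linear_on X f" "x \<in> X" "y \<in> X"
  shows "f (x - y) = f x - f y"
proof -
  have "f (x - y) = f (x + (-1) *\<^sub>s y)" by (rule arg_cong[where f=f]) (simp add: fun_eq_iff)
  also have "\<dots> = f x + f ((-1) *\<^sub>s y)"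
    using assms by (intro linear_onD(1)[OF assms(2)] linear_subspace_closed(3))
  also have "f ((-1) *\<^sub>s y) = -1 * f y" by (rule linear_onD(2)[OF assms(2,4)])
  finally show ?thesis by (simp only: mult_minus1 diff_conv_add_uminus)
qed

lemma real_linear_on_Re:
  "linear_on X f \<Longrightarrow> real_linear_on X (\<lambda>x. Re (f x))"
  unfolding real_linear_on_def by (simp add: linear_onD)

text \<open>A real-linear functional U is the real part of exactly one complex-linear functional,
  namely x \<mapsto> U x - \<i> U (\<i> x).\<close>

definition complexification :: "(seq \<Rightarrow> real) \<Rightarrow> seq \<Rightarrow> complex" where
  "complexification U x = of_real (U x) - \<i> * of_real (U (\<i> *\<^sub>s x))"

lemma linear_on_complexification:
  assumes X: "linear_subspace X" and U: "real_linear_on X U"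
  shows "linear_on X (complexification U)"
proof -
  have add: "U (x + y) = U x + U y" and scale: "U (of_real r *\<^sub>s x) = r * U x"
    if "x \<in> X" "y \<in> X" for x y r
    using U that unfolding real_linear_on_def by blast+
  note closed = linear_subspace_closed[OF X]
  have "complexification U (c *\<^sub>s x) = c * complexification U x" if x: "x \<in> X" for c x
  proof -
    have e1: "c *\<^sub>s x = of_real (Re c) *\<^sub>s x + of_real (Im c) *\<^sub>s \<i> *\<^sub>s x"
      by (simp add: fun_eq_iff complex_eq_iff)
    have e2: "\<i> *\<^sub>s c *\<^sub>s x = of_real (Re c) *\<^sub>s \<i> *\<^sub>s x + of_real (- Im c) *\<^sub>s x"
      by (simp add: fun_eq_iff complex_eq_iff)
    have "U (c *\<^sub>s x) = Re c * U x + Im c * U (\<i> *\<^sub>s x)"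
      unfolding e1 using x by (simp add: add scale closed del: scale_seq_scale_seq)
    moreover have "U (\<i> *\<^sub>s c *\<^sub>s x) = Re c * U (\<i> *\<^sub>s x) - Im c * U x"
      unfolding e2 using x by (simp add: add scale closed del: scale_seq_scale_seq of_real_minus)
    ultimately show ?thesis by (simp add: complexification_def complex_eq_iff algebra_simps)
  qed
  moreover have "complexification U (x + y) = complexification U x + complexification U y"
    if "x \<in> X" "y \<in> X" for x y
    using that by (simp add: complexification_def scale_seq_add_right add closed algebra_simps)
  ultimately show ?thesis unfolding linear_on_def by blast
qed

lemma complexification_Re:
  assumes P: "linear_subspace P" and g: "linear_on P g" and "x \<in> P"
    and U: "\<And>x. x \<in> P \<Longrightarrow> U x = Re (g x)"
  shows "complexification U x = g x"
  using assms linear_subspace_closed(3)[OF P] by (simp add: complexification_def linear_onD complex_eq_iff)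

lemma (in seq_tvs) continuous_if_bounded_on_neighbourhood:
  assumes f: "linear_on X f" and N: "openin T N" "0 \<in> N" "\<And>x. x \<in> N \<Longrightarrow> cmod (f x) \<le> B"
  shows "continuous_map T euclidean f"
  unfolding continuous_map_eq_topcontinuous_at topcontinuous_at_def
proof (intro ballI conjI allI impI)
  fix x0 V assume x0: "x0 \<in> topspace T" and V: "openin euclidean V \<and> f x0 \<in> V"
  then have "open V" "f x0 \<in> V" by simp_all
  then obtain e where e: "e > 0" "ball (f x0) e \<subseteq> V" using open_contains_ball by blast
  have "B \<ge> 0" using N(2,3) linear_on_zero[OF linear_subspace f] by fastforce
  define k where "k = (B + 1) / e"
  have k: "k > 0" using \<open>B \<ge> 0\<close> e(1) by (simp add: k_def)
  define M where "M = {x \<in> X. of_real k *\<^sub>s (x - x0) \<in> N}"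
  have "openin T M" unfolding M_def
    using x0 by (intro openin_preimage[OF _ N(1)] continuous_map_translations
        continuous_map_compose[OF _ continuous_map_scale_const, unfolded o_def]) simp
  moreover have "x0 \<in> M" using x0 N(2) by (simp add: M_def)
  moreover have "f x \<in> V" if "x \<in> M" for x
  proof -
    have x: "x \<in> X" "of_real k *\<^sub>s (x - x0) \<in> N" using that by (simp_all add: M_def)
    have "k * cmod (f x - f x0) = cmod (f (of_real k *\<^sub>s (x - x0)))"
      using x x0 k by (simp add: linear_onD(2)[OF f] linear_on_diff[OF linear_subspace f] norm_mult)
    also have "\<dots> \<le> B" using N(3) x(2) by blast
    also have "\<dots> < k * e" using e(1) by (simp add: k_def)
    finally have "dist (f x) (f x0) < e" using k by (simp add: dist_norm)
    then show ?thesis using e(2) by (auto simp: dist_commute)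
  qed
  ultimately show "\<exists>M. openin T M \<and> x0 \<in> M \<and> (\<forall>x\<in>M. f x \<in> V)" by blast
qed auto

definition minkowski_functional :: "seq set \<Rightarrow> seq \<Rightarrow> real" where
  "minkowski_functional C x = Inf {t. t > 0 \<and> of_real (1 / t) *\<^sub>s x \<in> C}"

locale convex_zero_neighbourhood = seq_tvs +
  fixes C :: "seq set"
  assumes openin_C: "openin T C" and zero_in_C: "0 \<in> C" and convex_C: "convex_seqset C"
    and uminus_in_C: "\<And>x. x \<in> C \<Longrightarrow> - x \<in> C"
begin

abbreviation "\<mu> \<equiv> minkowski_functional C"

lemma minkowski_set_nonempty: "x \<in> X \<Longrightarrow> {t. t > 0 \<and> of_real (1 / t) *\<^sub>s x \<in> C} \<noteq> {}"
proof -
  assume "x \<in> X"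
  then obtain e where e: "e > 0" "\<And>c. cmod c < e \<Longrightarrow> c *\<^sub>s x \<in> C"
    using small_scalars[OF openin_C zero_in_C] by blast
  have "cmod (of_real (1 / (2 / e))) < e" using e(1) by simp
  then have "2 / e \<in> {t. t > 0 \<and> of_real (1 / t) *\<^sub>s x \<in> C}" using e by simp
  then show ?thesis by blast
qed

lemma minkowski_le: "t > 0 \<Longrightarrow> of_real (1 / t) *\<^sub>s x \<in> C \<Longrightarrow> \<mu> x \<le> t"
  unfolding minkowski_functional_def by (rule cInf_lower) (auto intro: bdd_belowI[of _ 0])

lemma le_minkowski:
  "x \<in> X \<Longrightarrow> (\<And>t. t > 0 \<Longrightarrow> of_real (1 / t) *\<^sub>s x \<in> C \<Longrightarrow> a \<le> t) \<Longrightarrow> a \<le> \<mu> x"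
  unfolding minkowski_functional_def by (rule cInf_greatest) (use minkowski_set_nonempty in auto)

lemma minkowski_approx:
  assumes "x \<in> X" "e > 0"
  obtains t where "t > 0" "of_real (1 / t) *\<^sub>s x \<in> C" "t < \<mu> x + e"
  using cInf_lessD[OF minkowski_set_nonempty[OF assms(1)], of "\<mu> x + e"] assms(2)
  unfolding minkowski_functional_def by auto

lemma minkowski_le_one: "x \<in> C \<Longrightarrow> \<mu> x \<le> 1"
  using minkowski_le[of 1 x] by simp

lemma minkowski_uminus: "\<mu> (- x) = \<mu> x"
proof -
  have "of_real (1 / t) *\<^sub>s (- x) \<in> C \<longleftrightarrow> of_real (1 / t) *\<^sub>s x \<in> C" for t
    using uminus_in_C[of "of_real (1 / t) *\<^sub>s x"] uminus_in_C[of "- (of_real (1 / t) *\<^sub>s x)"]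
    by auto
  then show ?thesis by (simp add: minkowski_functional_def)
qed

lemma convex_combination_in_C:
  "x \<in> C \<Longrightarrow> y \<in> C \<Longrightarrow> 0 \<le> u \<Longrightarrow> u \<le> 1 \<Longrightarrow> of_real u *\<^sub>s x + of_real (1 - u) *\<^sub>s y \<in> C"
  using convex_C unfolding convex_seqset_iff by blast

lemma minkowski_add:
  assumes xy: "x \<in> X" "y \<in> X"
  shows "\<mu> (x + y) \<le> \<mu> x + \<mu> y"
proof (rule field_le_epsilon)
  fix e :: real assume "e > 0"
  obtain s where s: "s > 0" "of_real (1 / s) *\<^sub>s x \<in> C" "s < \<mu> x + e / 2"
    using minkowski_approx[OF xy(1), of "e / 2"] \<open>e > 0\<close> by auto
  obtain t where t: "t > 0" "of_real (1 / t) *\<^sub>s y \<in> C" "t < \<mu> y + e / 2"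
    using minkowski_approx[OF xy(2), of "e / 2"] \<open>e > 0\<close> by auto
  define u where "u = s / (s + t)"
  have u: "0 \<le> u" "u \<le> 1" "1 - u = t / (s + t)" using s(1) t(1) by (auto simp: u_def field_simps)
  have "of_real u *\<^sub>s of_real (1 / s) *\<^sub>s x + of_real (1 - u) *\<^sub>s of_real (1 / t) *\<^sub>s y \<in> C"
    using convex_combination_in_C[OF s(2) t(2) u(1,2)] .
  also have "of_real u *\<^sub>s of_real (1 / s) *\<^sub>s x + of_real (1 - u) *\<^sub>s of_real (1 / t) *\<^sub>s y
      = of_real (1 / (s + t)) *\<^sub>s (x + y)"
    using s(1) t(1) unfolding u(3) by (simp add: u_def fun_eq_iff field_simps add_divide_distrib)
  finally have "of_real (1 / (s + t)) *\<^sub>s (x + y) \<in> C" .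
  then have "\<mu> (x + y) \<le> s + t" using s(1) t(1) by (intro minkowski_le) simp_all
  then show "\<mu> (x + y) \<le> \<mu> x + \<mu> y + e" using s(3) t(3) by simp
qed

lemma minkowski_scale_le:
  assumes r: "r > 0" and x: "x \<in> X"
  shows "\<mu> (of_real r *\<^sub>s x) \<le> r * \<mu> x"
proof (rule field_le_epsilon)
  fix e :: real assume "e > 0"
  obtain t where t: "t > 0" "of_real (1 / t) *\<^sub>s x \<in> C" "t < \<mu> x + e / r"
    using minkowski_approx[OF x, of "e / r"] \<open>e > 0\<close> r by auto
  have "of_real (1 / (r * t)) *\<^sub>s of_real r *\<^sub>s x = of_real (1 / t) *\<^sub>s x"
    using r by (simp add: fun_eq_iff)
  then have "\<mu> (of_real r *\<^sub>s x) \<le> r * t" using t(1,2) r by (intro minkowski_le) simp_all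
  also have "\<dots> \<le> r * \<mu> x + e" using t(3) r by (simp add: field_simps)
  finally show "\<mu> (of_real r *\<^sub>s x) \<le> r * \<mu> x + e" .
qed

lemma sublinear_minkowski: "sublinear_on X \<mu>"
  unfolding sublinear_on_def
proof (intro conjI ballI allI impI)
  show "\<mu> (x + y) \<le> \<mu> x + \<mu> y" if "x \<in> X" "y \<in> X" for x y using minkowski_add that .
  fix r :: real and x assume r: "r > 0" and x: "x \<in> X"
  show "\<mu> (of_real r *\<^sub>s x) = r * \<mu> x"
  proof (rule antisym)
    show "\<mu> (of_real r *\<^sub>s x) \<le> r * \<mu> x" by (rule minkowski_scale_le[OF r x])
    have "\<mu> (of_real (1 / r) *\<^sub>s of_real r *\<^sub>s x) \<le> (1 / r) * \<mu> (of_real r *\<^sub>s x)"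
      using r x by (intro minkowski_scale_le) simp_all
    then show "r * \<mu> x \<le> \<mu> (of_real r *\<^sub>s x)" using r by (simp add: field_simps)
  qed
qed

end

lemma (in seq_tvs) convex_zero_neighbourhood_inside:
  assumes "locally_convex T" "openin T U" "0 \<in> U"
  obtains C where "convex_zero_neighbourhood X T C" "C \<subseteq> U"
proof -
  obtain V where V: "openin T V" "0 \<in> V" "V \<subseteq> U" "convex_seqset V"
    using assms unfolding locally_convex_def zero_fun_def by blast
  define C where "C = {x \<in> V. - x \<in> V}"
  have "C = V \<inter> {x \<in> X. (-1) *\<^sub>s x \<in> V}" using V(1) openin_subset_carrier by (auto simp: C_def)
  then have "openin T C"
    using openin_Int[OF V(1) openin_preimage[OF continuous_map_scale_const[where c="-1"] V(1)]] by simp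
  moreover have "of_real u *\<^sub>s x + of_real (1 - u) *\<^sub>s y \<in> C"
    if "x \<in> C" "y \<in> C" "0 \<le> u" "u \<le> 1" for x y u
  proof -
    have "of_real u *\<^sub>s x + of_real (1 - u) *\<^sub>s y \<in> V"
      "of_real u *\<^sub>s (- x) + of_real (1 - u) *\<^sub>s (- y) \<in> V"
      using V(4) that unfolding convex_seqset_iff C_def by blast+
    then show ?thesis by (simp add: C_def)
  qed
  then have "convex_seqset C" unfolding convex_seqset_iff by blast
  ultimately have "convex_zero_neighbourhood X T C"
    using V(2) by unfold_locales (auto simp: C_def)
  then show thesis using V(3) that by (auto simp: C_def)
qed

context convex_zero_neighbourhood
begin

lemma abs_le_minkowski:
  assumes "real_linear_on X U" "\<And>x. x \<in> X \<Longrightarrow> U x \<le> \<mu> x" "x \<in> X"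
  shows "\<bar>U x\<bar> \<le> \<mu> x"
proof -
  have "U (of_real (-1) *\<^sub>s x) = -1 * U x" using assms(1,3) unfolding real_linear_on_def by blast
  then have "- U x = U (- x)" by simp
  also have "\<dots> \<le> \<mu> x" using assms(2)[of "- x"] assms(3) minkowski_uminus by simp
  finally show ?thesis using assms(2)[OF assms(3)] by (simp add: abs_le_iff)
qed

lemma continuous_complexification:
  assumes U: "real_linear_on X U" "\<And>x. x \<in> X \<Longrightarrow> U x \<le> \<mu> x"
  shows "continuous_map T euclidean (complexification U)"
proof (rule continuous_if_bounded_on_neighbourhood)
  show "linear_on X (complexification U)" by (rule linear_on_complexification[OF linear_subspace U(1)])
  define N where "N = C \<inter> {w \<in> X. \<i> *\<^sub>s w \<in> C}"
  show "openin T N"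
    unfolding N_def by (rule openin_Int[OF openin_C openin_preimage[OF continuous_map_scale_const openin_C]])
  show "0 \<in> N" using zero_in_C by (simp add: N_def)
  fix w assume "w \<in> N"
  then have w: "w \<in> X" "w \<in> C" "\<i> *\<^sub>s w \<in> C" by (auto simp: N_def)
  have "cmod (complexification U w) \<le> cmod (of_real (U w)) + cmod (\<i> * of_real (U (\<i> *\<^sub>s w)))"
    unfolding complexification_def by (rule norm_triangle_ineq4)
  also have "\<dots> = \<bar>U w\<bar> + \<bar>U (\<i> *\<^sub>s w)\<bar>" by (simp add: norm_mult)
  also have "\<dots> \<le> \<mu> w + \<mu> (\<i> *\<^sub>s w)"
    using abs_le_minkowski[OF U w(1)] abs_le_minkowski[OF U scale_mem[OF w(1)]] by (rule add_mono)
  also have "\<dots> \<le> 2" using minkowski_le_one[OF w(2)] minkowski_le_one[OF w(3)] by simp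
  finally show "cmod (complexification U w) \<le> 2" .
qed

lemma Re_le_minkowski:
  assumes P: "linear_subspace P" and g: "linear_on P g" and Cg: "\<And>x. x \<in> C \<Longrightarrow> x \<in> P \<Longrightarrow> cmod (g x) < 1"
    and x: "x \<in> P" "x \<in> X"
  shows "Re (g x) \<le> \<mu> x"
proof (rule le_minkowski[OF x(2)])
  fix t :: real assume t: "t > 0" "of_real (1 / t) *\<^sub>s x \<in> C"
  have "Re (g (of_real (1 / t) *\<^sub>s x)) < 1"
    using Cg[OF t(2)] linear_subspace_closed(3)[OF P x(1)] complex_Re_le_cmod le_less_trans by blast
  then have "Re (g x) / t < 1" using linear_onD(2)[OF g x(1)] by simp
  then show "Re (g x) \<le> t" using t(1) by (simp add: field_simps)
qed

end

theorem (in seq_tvs) continuous_linear_extension: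
  assumes lc: "locally_convex T" and P: "linear_subspace P" "P \<subseteq> X"
    and g: "continuous_map (subtopology T P) euclidean g" "linear_on P g"
  obtains f where "continuous_map T euclidean f" "linear_on X f" "\<And>x. x \<in> P \<Longrightarrow> f x = g x"
proof -
  have "topspace (subtopology T P) = P" using P(2) by auto
  then have "openin (subtopology T P) {x \<in> P. cmod (g x) < 1}"
    using openin_continuous_map_preimage[OF g(1), of "ball 0 1"] by (simp add: dist_norm)
  then obtain G where G: "openin T G" "{x \<in> P. cmod (g x) < 1} = G \<inter> P"
    unfolding openin_subtopology by blast
  have "0 \<in> {x \<in> P. cmod (g x) < 1}"
    using linear_on_zero[OF P(1) g(2)] linear_subspace_closed(1)[OF P(1)] by simp
  then have "0 \<in> G" using G(2) by blast
  then obtain C where C: "convex_zero_neighbourhood X T C" "C \<subseteq> G"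
    using convex_zero_neighbourhood_inside[OF lc G(1)] by metis
  interpret C: convex_zero_neighbourhood X T C by (fact C(1))
  have small: "cmod (g x) < 1" if "x \<in> C" "x \<in> P" for x using G(2) C(2) that by blast
  have "Re (g x) \<le> C.\<mu> x" if "x \<in> P" for x
    using C.Re_le_minkowski[OF P(1) g(2) small that] P(2) that by blast
  then obtain U where U: "real_linear_on X U" "\<forall>x\<in>X. U x \<le> C.\<mu> x" "\<forall>x\<in>P. U x = Re (g x)"
    using hahn_banach_real[OF linear_subspace P C.sublinear_minkowski real_linear_on_Re[OF g(2)]] by blast
  show thesis
  proof (rule that)
    show "continuous_map T euclidean (complexification U)"
      using C.continuous_complexification U(1,2) by blast
    show "linear_on X (complexification U)" by (rule linear_on_complexification[OF linear_subspace U(1)])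
    show "complexification U x = g x" if "x \<in> P" for x
      using complexification_Re[OF P(1) g(2) that] U(3) by blast
  qed
qed

section \<open>Duals of FK-spaces between the closure of phi and X\<close>

context seq_tvs
begin

lemma linear_subspace_closure_of:
  assumes L: "linear_subspace L" "L \<subseteq> X"
  shows "linear_subspace (T closure_of L)"
proof -
  note closed = linear_subspace_closed[OF L(1)]
  have "0 \<in> T closure_of L" using closure_of_subset[of L T] L(2) closed(1) by auto
  moreover have "x + y \<in> T closure_of L" if "x \<in> T closure_of L" "y \<in> T closure_of L" for x y
  proof -
    have "(x, y) \<in> prod_topology T T closure_of (L \<times> L)" using that by (simp add: closure_of_Times)
    then have "(\<lambda>(x, y). x + y) (x, y) \<in> T closure_of ((\<lambda>(x, y). x + y) ` (L \<times> L))"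
      using continuous_map_image_closure_subset[OF continuous_map_add_pair] by blast
    moreover have "(\<lambda>(x, y). x + y) ` (L \<times> L) \<subseteq> L" using closed(2) by auto
    ultimately show ?thesis using closure_of_mono by fastforce
  qed
  moreover have "c *\<^sub>s x \<in> T closure_of L" if "x \<in> T closure_of L" for c x
  proof -
    have "c *\<^sub>s x \<in> T closure_of ((\<lambda>x. c *\<^sub>s x) ` L)"
      using continuous_map_image_closure_subset[OF continuous_map_scale_const] that by blast
    moreover have "(\<lambda>x. c *\<^sub>s x) ` L \<subseteq> L" using closed(3) by auto
    ultimately show ?thesis using closure_of_mono by fastforce
  qed
  ultimately show ?thesis unfolding linear_subspace_iff by blast
qed

lemma seq_tvs_subtopology:
  assumes L: "linear_subspace L" "L \<subseteq> X"
  shows "seq_tvs L (subtopology T L)"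
proof
  note closed = linear_subspace_closed[OF L(1)]
  have top: "topspace (subtopology T L) = L" using L(2) by auto
  have "continuous_map (prod_topology (subtopology T L) (subtopology T L)) T (\<lambda>(x, y). x + y)"
    unfolding prod_topology_subtopology
    by (intro continuous_map_from_subtopology continuous_map_add_pair)
  moreover have "continuous_map (prod_topology euclidean (subtopology T L)) T (\<lambda>(c, x). c *\<^sub>s x)"
    unfolding prod_topology_subtopology
    by (intro continuous_map_from_subtopology continuous_map_scale_pair)
  ultimately show "vector_topology L (subtopology T L)"
    unfolding vector_topology_iff continuous_map_in_subtopology using closed(2,3) top by auto
qed (fact L(1))

end

lemma (in seq_F_space) seq_F_space_closure_of:
  assumes "linear_subspace L" "L \<subseteq> X"
  shows "seq_F_space (T closure_of L) (subtopology T (T closure_of L))"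
proof -
  have "T closure_of L \<subseteq> X" using closure_of_subset_topspace[of T L] by simp
  interpret L: seq_tvs "T closure_of L" "subtopology T (T closure_of L)"
    by (rule seq_tvs_subtopology[OF linear_subspace_closure_of[OF assms] \<open>T closure_of L \<subseteq> X\<close>])
  show ?thesis
    by unfold_locales (auto intro: completely_metrizable_space_closedin[OF completely_metrizable]
        continuous_map_from_subtopology continuous_coordinate)
qed

lemma FK_space_imp_seq_F_space:
  assumes "FK_space X T"
  shows "seq_F_space X T"
proof -
  have "completely_metrizable_space T"
    using assms unfolding FK_space_def complete_metrizable_def completely_metrizable_space_def
    by blast
  then show ?thesis
    using assms unfolding FK_space_def seq_F_space_def seq_F_space_axioms_def seq_tvs_def by blast
qed

lemma dual_subset_if_continuous_inclusion:
  assumes "Y \<subseteq> X" "continuous_map S T (\<lambda>x. x)" "f \<in> dual X T"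
  shows "f \<in> dual Y S"
proof -
  have "continuous_map S euclidean (f \<circ> (\<lambda>x. x))"
    using continuous_map_compose assms(2,3) by (auto simp: mem_dual_iff)
  moreover have "linear_on Y f" using assms(1,3) unfolding mem_dual_iff linear_on_def by blast
  ultimately show ?thesis by (simp add: mem_dual_iff o_def)
qed

lemma DqpBplus_subset_if_dual_values:
  assumes "\<And>g. g \<in> dual Y S \<Longrightarrow> \<exists>f\<in>dual X T. \<forall>j. f (delta j) = g (delta j)"
  shows "DqpBplus p q X T \<subseteq> DqpBplus p q Y S"
  unfolding DqpBplus_def
proof (intro subsetI CollectI ballI)
  fix x g assume x: "x \<in> {x. \<forall>f\<in>dual X T. bounded (range (\<lambda>n.
      (1 / of_nat (q n - p n)) * (\<Sum>k\<in>{p n..<q n}. \<Sum>j\<in>{0..k}. x j * f (delta j))))}"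
    and "g \<in> dual Y S"
  then obtain f where "f \<in> dual X T" "\<forall>j. f (delta j) = g (delta j)" using assms by blast
  moreover have "bounded (range (\<lambda>n.
      (1 / of_nat (q n - p n)) * (\<Sum>k\<in>{p n..<q n}. \<Sum>j\<in>{0..k}. x j * f (delta j))))"
    using x \<open>f \<in> dual X T\<close> by blast
  ultimately show "bounded (range (\<lambda>n.
      (1 / of_nat (q n - p n)) * (\<Sum>k\<in>{p n..<q n}. \<Sum>j\<in>{0..k}. x j * g (delta j))))"
    by simp
qed

lemma dual_extension_from_closure_phi:
  assumes FKX: "FK_space X T" and phiX: "phi \<subseteq> X" and Y: "seq_F_space Y S"
    and sub: "T closure_of phi \<subseteq> Y" and g: "g \<in> dual Y S"
  shows "\<exists>f\<in>dual X T. \<forall>j. f (delta j) = g (delta j)"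
proof -
  interpret X: seq_F_space X T by (rule FK_space_imp_seq_F_space[OF FKX])
  interpret Y: seq_F_space Y S by (fact Y)
  define P where "P = T closure_of phi"
  have P: "linear_subspace P" "P \<subseteq> X" "phi \<subseteq> P"
    using X.linear_subspace_closure_of[OF linear_subspace_phi phiX] closure_of_subset[of phi T] phiX
      closure_of_subset_topspace[of T phi] by (auto simp: P_def)
  interpret P: seq_F_space P "subtopology T P"
    unfolding P_def by (rule X.seq_F_space_closure_of[OF linear_subspace_phi phiX])
  interpret restriction: F_space_inclusion P "subtopology T P" Y S
    by unfold_locales (use sub P_def in blast)
  have "g \<in> dual P (subtopology T P)"
    by (rule dual_subset_if_continuous_inclusion[OF restriction.subset
          restriction.continuous_inclusion g])
  then obtain f where f: "continuous_map T euclidean f" "linear_on X f" "\<And>x. x \<in> P \<Longrightarrow> f x = g x"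
    using X.continuous_linear_extension[OF _ P(1,2)] FKX unfolding FK_space_def mem_dual_iff by metis
  have "f \<in> dual X T" using f(1,2) by (simp add: mem_dual_iff)
  moreover have "f (delta j) = g (delta j)" for j using f(3) delta_in_phi P(3) by blast
  ultimately show ?thesis by blast
qed

theorem mainTheorem9:
  fixes p q :: "nat \<Rightarrow> nat" and X Y :: "seq set" and T S :: "seq topology"
  assumes pq: "\<And>n. p n < q n"
    and q_inf: "filterlim q at_top sequentially"
    and FKX: "FK_space X T" and phiX: "phi \<subseteq> X"
    and FKY: "FK_space Y S"
    and sub1: "T closure_of phi \<subseteq> Y" and sub2: "Y \<subseteq> X"
  shows "DqpBplus p q Y S = DqpBplus p q X T"
proof
  interpret inclusion: F_space_inclusion Y S X T
    using FK_space_imp_seq_F_space[OF FKY] FK_space_imp_seq_F_space[OF FKX] sub2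
    by (simp add: F_space_inclusion_def F_space_inclusion_axioms_def)
  show "DqpBplus p q Y S \<subseteq> DqpBplus p q X T"
    by (rule DqpBplus_subset_if_dual_values)
      (metis dual_subset_if_continuous_inclusion[OF sub2 inclusion.continuous_inclusion])
  show "DqpBplus p q X T \<subseteq> DqpBplus p q Y S"
    by (rule DqpBplus_subset_if_dual_values)
      (rule dual_extension_from_closure_phi[OF FKX phiX FK_space_imp_seq_F_space[OF FKY] sub1])
qed

end
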